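(* Let $G$ be a graph with edge set $E$, let $k\ge1$, and suppose $M_k(G)$ is a non-trivial matroid (so that $G$ has a component with at least two cycles and the core $[G]$ is defined). Let $t(H)$ be the number of tree components of a graph $H$ and $Y(G)=\{e\in E: t(G\setminus e)>t(G)\}$. Then the set of coloops of $M_k(G)$ equals $E\setminus E([G])$, and this set equals $Y(G)$.
   Context: Graphs are finite, may have loops and parallel edges, and have no isolated vertices; $G\setminus e$ deletes the edge $e$ and keeps all vertices (a single vertex counts as a tree component). A leaf is a vertex incident to exactly one edge, which is not a loop. $\Delta H=|E(H)|-|V(H)|$. For $X\subseteq E$, $G\langle X\rangle$ is the subgraph with edge set $X$ and vertex set the vertices incident to $X$. For $k\ge0$, $M_k(G)$ is the matroid on $E$ whose circuits are the inclusion-minimal members of $\{C\subseteq E:C\neq\emptyset,\ |C|=|V(G\langle C\rangle)|+k\}$. A matroid is non-trivial if it has at least one circuit and at least one cocircuit. A coloop is an element lying in no circuit. For a connected graph $A$ containing a cycle, its kernel $\lfloor A\rfloor$ is the subgraph obtained by repeatedly deleting leaves (with incident edges) until none remain; the core $[G]$ is the union of $\lfloor A\rfloor$ over components $A$ of $G$ with $\Delta A\ge1$. *)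

theory Defs
  imports Main
begin

text \<open>A (multi)graph is given by a finite edge set E and an incidence map
  ends :: 'e => 'v set; ends e has one element (a loop) or two elements.
  The vertex set is the set of vertices incident to edges (no isolated vertices).\<close>

definition multigraph :: "'e set \<Rightarrow> ('e \<Rightarrow> 'v set) \<Rightarrow> bool" where
  "multigraph E ends \<longleftrightarrow> finite E \<and>
     (\<forall>e\<in>E. finite (ends e) \<and> 1 \<le> card (ends e) \<and> card (ends e) \<le> 2)"

definition verts :: "('e \<Rightarrow> 'v set) \<Rightarrow> 'e set \<Rightarrow> 'v set" where
  "verts ends X = \<Union> (ends ` X)"

definition Mk_circuits :: "'e set \<Rightarrow> ('e \<Rightarrow> 'v set) \<Rightarrow> nat \<Rightarrow> 'e set set" where
  "Mk_circuits E ends k =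
     {C. C \<subseteq> E \<and> C \<noteq> {} \<and> card C = card (verts ends C) + k \<and>
         (\<forall>D. D \<subset> C \<longrightarrow> \<not> (D \<noteq> {} \<and> card D = card (verts ends D) + k))}"

definition indep_from_circuits :: "'e set \<Rightarrow> 'e set set \<Rightarrow> 'e set \<Rightarrow> bool" where
  "indep_from_circuits E \<C> I \<longleftrightarrow> I \<subseteq> E \<and> (\<forall>C\<in>\<C>. \<not> C \<subseteq> I)"

definition bases_from_circuits :: "'e set \<Rightarrow> 'e set set \<Rightarrow> 'e set set" where
  "bases_from_circuits E \<C> =
     {B. indep_from_circuits E \<C> B \<and> (\<forall>I. indep_from_circuits E \<C> I \<longrightarrow> B \<subseteq> I \<longrightarrow> I = B)}"

definition cocircuits_from_circuits :: "'e set \<Rightarrow> 'e set set \<Rightarrow> 'e set set" where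
  "cocircuits_from_circuits E \<C> =
     {D. D \<subseteq> E \<and> D \<noteq> {} \<and> (\<forall>B\<in>bases_from_circuits E \<C>. D \<inter> B \<noteq> {}) \<and>
         (\<forall>D'. D' \<subset> D \<longrightarrow> \<not> (D' \<noteq> {} \<and> (\<forall>B\<in>bases_from_circuits E \<C>. D' \<inter> B \<noteq> {})))}"

definition nontrivial_matroid :: "'e set \<Rightarrow> 'e set set \<Rightarrow> bool" where
  "nontrivial_matroid E \<C> \<longleftrightarrow> \<C> \<noteq> {} \<and> cocircuits_from_circuits E \<C> \<noteq> {}"

definition coloops :: "'e set \<Rightarrow> 'e set set \<Rightarrow> 'e set" where
  "coloops E \<C> = {e\<in>E. \<forall>C\<in>\<C>. e \<notin> C}"

definition adj :: "('e \<Rightarrow> 'v set) \<Rightarrow> 'e set \<Rightarrow> ('v \<times> 'v) set" where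
  "adj ends E = {(u,w). \<exists>e\<in>E. u \<in> ends e \<and> w \<in> ends e}"

definition comp_of :: "('e \<Rightarrow> 'v set) \<Rightarrow> 'v set \<Rightarrow> 'e set \<Rightarrow> 'v \<Rightarrow> 'v set" where
  "comp_of ends V E v = {w\<in>V. (v,w) \<in> (adj ends E)\<^sup>*}"

definition comps :: "('e \<Rightarrow> 'v set) \<Rightarrow> 'v set \<Rightarrow> 'e set \<Rightarrow> 'v set set" where
  "comps ends V E = comp_of ends V E ` V"

definition comp_edges :: "('e \<Rightarrow> 'v set) \<Rightarrow> 'e set \<Rightarrow> 'v set \<Rightarrow> 'e set" where
  "comp_edges ends E C = {e\<in>E. ends e \<subseteq> C}"

definition Delta_comp :: "('e \<Rightarrow> 'v set) \<Rightarrow> 'e set \<Rightarrow> 'v set \<Rightarrow> int" where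
  "Delta_comp ends E C = int (card (comp_edges ends E C)) - int (card C)"

text \<open>Number of tree components (connected with |E| = |V| - 1; single vertices count).\<close>
definition tree_count :: "('e \<Rightarrow> 'v set) \<Rightarrow> 'v set \<Rightarrow> 'e set \<Rightarrow> nat" where
  "tree_count ends V E = card {C \<in> comps ends V E. Delta_comp ends E C = -1}"

definition Yset :: "'e set \<Rightarrow> ('e \<Rightarrow> 'v set) \<Rightarrow> 'e set" where
  "Yset E ends = {e\<in>E. tree_count ends (verts ends E) (E - {e}) > tree_count ends (verts ends E) E}"

definition is_leaf :: "('e \<Rightarrow> 'v set) \<Rightarrow> 'v set \<Rightarrow> 'e set \<Rightarrow> 'v \<Rightarrow> 'e \<Rightarrow> bool" where
  "is_leaf ends V E v e \<longleftrightarrow> v \<in> V \<and> e \<in> E \<and> v \<in> ends e \<and> card (ends e) = 2 \<and>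
      (\<forall>f\<in>E. v \<in> ends f \<longrightarrow> f = e)"

definition leaf_step :: "('e \<Rightarrow> 'v set) \<Rightarrow> ('v set \<times> 'e set) \<Rightarrow> ('v set \<times> 'e set) \<Rightarrow> bool" where
  "leaf_step ends G H \<longleftrightarrow>
     (\<exists>v e. is_leaf ends (fst G) (snd G) v e \<and> H = (fst G - {v}, snd G - {e}))"

definition no_leaves :: "('e \<Rightarrow> 'v set) \<Rightarrow> ('v set \<times> 'e set) \<Rightarrow> bool" where
  "no_leaves ends H \<longleftrightarrow> (\<nexists>v e. is_leaf ends (fst H) (snd H) v e)"

definition kernel :: "('e \<Rightarrow> 'v set) \<Rightarrow> 'e set \<Rightarrow> 'v set \<Rightarrow> 'v set \<times> 'e set" where
  "kernel ends E C = (THE H. (leaf_step ends)\<^sup>*\<^sup>* (C, comp_edges ends E C) H \<and> no_leaves ends H)"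

definition core_edges :: "'e set \<Rightarrow> ('e \<Rightarrow> 'v set) \<Rightarrow> 'e set" where
  "core_edges E ends =
     (\<Union>C\<in>{C\<in>comps ends (verts ends E) E. Delta_comp ends E C \<ge> 1}. snd (kernel ends E C))"

end

theory Submission
  imports Defs
begin

text \<open>Write \<open>delta X = |X| - |V(X)|\<close> for an edge set \<open>X\<close>. The function \<open>delta\<close> is
  supermodular, and removing one edge lowers it by at most one; hence the circuits of \<open>M_k(G)\<close>
  are exactly the sets with \<open>delta = k\<close> all of whose proper subsets have smaller \<open>delta\<close>
  (critical sets), and a critical set can be shrunk or, using a second critical set, enlarged
  to one of \<open>delta = k\<close> while keeping a prescribed edge.

  A critical set has no leaf, so each circuit lies in the kernels of components with
  \<open>Delta \<ge> 1\<close>, i.e. in the core. Conversely, in a connected graph any subset with at least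
  the full \<open>delta\<close> contains every subgraph whose leaves it covers, so a minimal such subset of a
  component is critical and contains the kernel, the largest leafless subgraph; given one
  circuit, it yields a circuit through any prescribed kernel edge. Hence the coloops are the
  non-core edges.

  Deleting an edge \<open>e\<close> only affects its component \<open>A\<close>, which becomes one or two components
  with total \<open>Delta\<close> one less. Comparing \<open>Delta\<close> of the pieces with \<open>delta\<close> of the kernel
  shows that a new tree component appears exactly when \<open>e\<close> is not a kernel edge.\<close>

section \<open>The excess \<open>delta\<close> of an edge set\<close>

definition delta :: "('e \<Rightarrow> 'v set) \<Rightarrow> 'e set \<Rightarrow> int" where
  "delta ends X = int (card X) - int (card (verts ends X))"

lemma verts_mono: "X \<subseteq> Y \<Longrightarrow> verts ends X \<subseteq> verts ends Y"
  unfolding verts_def by blast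

lemma verts_Un: "verts ends (X \<union> Y) = verts ends X \<union> verts ends Y"
  unfolding verts_def by blast

lemma verts_insert: "verts ends (insert f X) = ends f \<union> verts ends X"
  unfolding verts_def by blast

lemma verts_empty [simp]: "verts ends {} = {}"
  unfolding verts_def by blast

lemma mem_verts_iff: "v \<in> verts ends X \<longleftrightarrow> (\<exists>f\<in>X. v \<in> ends f)"
  unfolding verts_def by blast

lemma delta_empty [simp]: "delta ends {} = 0"
  by (simp add: delta_def)

lemma card_Diff_insert_Suc:
  assumes "finite Y" "f \<in> Y - D"
  shows "card (Y - D) = Suc (card (Y - insert f D))"
proof -
  have "Suc (card (Y - D - {f})) = card (Y - D)" using assms by (intro card_Suc_Diff1) auto
  moreover have "Y - D - {f} = Y - insert f D" by blast
  ultimately show ?thesis by simp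
qed

definition delta_critical :: "('e \<Rightarrow> 'v set) \<Rightarrow> 'e set \<Rightarrow> bool" where
  "delta_critical ends W \<longleftrightarrow> (\<forall>D. D \<subset> W \<longrightarrow> delta ends D < delta ends W)"

lemma delta_criticalD: "delta_critical ends W \<Longrightarrow> D \<subset> W \<Longrightarrow> delta ends D < delta ends W"
  unfolding delta_critical_def by blast

section \<open>Leaves and leafless edge sets\<close>

lemma is_leafD:
  "is_leaf ends V Y u f \<Longrightarrow>
     u \<in> V \<and> f \<in> Y \<and> u \<in> ends f \<and> card (ends f) = 2 \<and> (\<forall>g\<in>Y. u \<in> ends g \<longrightarrow> g = f)"
  unfolding is_leaf_def by blast

lemma is_leaf_in_verts:
  assumes "f \<in> Y" "u \<in> ends f" "card (ends f) = 2" "\<forall>g\<in>Y. u \<in> ends g \<longrightarrow> g = f"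
  shows "is_leaf ends (verts ends Y) Y u f"
  using assms unfolding is_leaf_def verts_def by blast

lemma is_leaf_subset:
  assumes "is_leaf ends V Y u f" "Z \<subseteq> Y" "f \<in> Z"
  shows "is_leaf ends (verts ends Z) Z u f"
  using assms is_leaf_in_verts[of f Z u ends] unfolding is_leaf_def by blast

definition leafless :: "('e \<Rightarrow> 'v set) \<Rightarrow> 'e set \<Rightarrow> bool" where
  "leafless ends Z \<longleftrightarrow> (\<forall>u g. \<not> is_leaf ends (verts ends Z) Z u g)"

definition max_leafless :: "('e \<Rightarrow> 'v set) \<Rightarrow> 'e set \<Rightarrow> 'e set" where
  "max_leafless ends F = \<Union> {Z. Z \<subseteq> F \<and> leafless ends Z}"

lemma max_leafless_subset: "max_leafless ends F \<subseteq> F"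
  unfolding max_leafless_def by blast

lemma subset_max_leafless: "Z \<subseteq> F \<Longrightarrow> leafless ends Z \<Longrightarrow> Z \<subseteq> max_leafless ends F"
  unfolding max_leafless_def by blast

lemma leafless_max_leafless: "leafless ends (max_leafless ends F)"
  unfolding leafless_def
proof (intro allI notI)
  fix u g assume leaf: "is_leaf ends (verts ends (max_leafless ends F)) (max_leafless ends F) u g"
  have "g \<in> max_leafless ends F" using is_leafD[OF leaf] by blast
  then obtain Z where Z: "Z \<subseteq> F" "leafless ends Z" "g \<in> Z" unfolding max_leafless_def by blast
  have "Z \<subseteq> max_leafless ends F" using Z(1,2) by (rule subset_max_leafless)
  with leaf have "is_leaf ends (verts ends Z) Z u g" using Z(3) by (rule is_leaf_subset)
  then show False using Z(2) by (simp add: leafless_def)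
qed

lemma leafless_other_edge:
  assumes "leafless ends L" "g \<in> L" "u \<in> ends g" "card (ends g) = 2"
  obtains h where "h \<in> L" "h \<noteq> g" "u \<in> ends h"
proof -
  have "\<not> (\<forall>h\<in>L. u \<in> ends h \<longrightarrow> h = g)"
  proof
    assume "\<forall>h\<in>L. u \<in> ends h \<longrightarrow> h = g"
    with assms(2-4) have "is_leaf ends (verts ends L) L u g" by (rule is_leaf_in_verts)
    then show False using assms(1) by (simp add: leafless_def)
  qed
  then obtain h where "h \<in> L" "h \<noteq> g" "u \<in> ends h" by blast
  then show thesis by (rule that)
qed

section \<open>Connectivity and components\<close>

text \<open>Connectivity of \<open>G\<langle>Y\<rangle>\<close> without paths: every proper nonempty part of \<open>Y\<close> meets another
  edge of \<open>Y\<close> in a vertex.\<close>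
definition connected_edges :: "('e \<Rightarrow> 'v set) \<Rightarrow> 'e set \<Rightarrow> bool" where
  "connected_edges ends Y \<longleftrightarrow>
     (\<forall>D. D \<noteq> {} \<longrightarrow> D \<subset> Y \<longrightarrow> (\<exists>f\<in>Y - D. ends f \<inter> verts ends D \<noteq> {}))"

lemma connected_edgesD:
  "connected_edges ends Y \<Longrightarrow> D \<noteq> {} \<Longrightarrow> D \<subset> Y \<Longrightarrow> \<exists>f\<in>Y - D. ends f \<inter> verts ends D \<noteq> {}"
  unfolding connected_edges_def by blast

lemma adjI: "g \<in> F \<Longrightarrow> u \<in> ends g \<Longrightarrow> w \<in> ends g \<Longrightarrow> (u, w) \<in> adj ends F"
  unfolding adj_def by blast

lemma adjD: "(u, w) \<in> adj ends F \<Longrightarrow> \<exists>g\<in>F. u \<in> ends g \<and> w \<in> ends g"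
  unfolding adj_def by blast

lemma adj_mono: "F \<subseteq> F' \<Longrightarrow> adj ends F \<subseteq> adj ends F'"
  unfolding adj_def by blast

lemma sym_adj: "sym (adj ends F)"
  unfolding adj_def sym_def by blast

lemma rtrancl_adj_closed:
  assumes "(x, z) \<in> (adj ends F)\<^sup>*" "x \<in> S"
    and closed: "\<And>g y. g \<in> F \<Longrightarrow> y \<in> ends g \<Longrightarrow> y \<in> S \<Longrightarrow> ends g \<subseteq> S"
  shows "z \<in> S"
  using assms(1)
proof (induction rule: rtrancl_induct)
  case base
  show ?case by (fact assms(2))
next
  case (step y z)
  then obtain g where "g \<in> F" "y \<in> ends g" "z \<in> ends g" using adjD[OF step(2)] by blast
  then show ?case using closed step(3) by blast
qed

lemma mem_comp_of_iff: "w \<in> comp_of ends V F x \<longleftrightarrow> w \<in> V \<and> (x, w) \<in> (adj ends F)\<^sup>*"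
  unfolding comp_of_def by blast

lemma comp_of_self: "x \<in> V \<Longrightarrow> x \<in> comp_of ends V F x"
  unfolding comp_of_def by blast

lemma comp_of_eq:
  assumes "y \<in> comp_of ends V F x"
  shows "comp_of ends V F y = comp_of ends V F x"
proof -
  have xy: "(x, y) \<in> (adj ends F)\<^sup>*" using assms by (simp add: mem_comp_of_iff)
  have yx: "(y, x) \<in> (adj ends F)\<^sup>*" using symD[OF sym_rtrancl[OF sym_adj] xy] .
  show ?thesis
    unfolding comp_of_def using rtrancl_trans[OF xy] rtrancl_trans[OF yx] by blast
qed

lemma comps_eq_comp_of: "C \<in> comps ends V F \<Longrightarrow> y \<in> C \<Longrightarrow> C = comp_of ends V F y"
  unfolding comps_def using comp_of_eq by fastforce

lemma comp_of_in_comps: "x \<in> V \<Longrightarrow> comp_of ends V F x \<in> comps ends V F"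
  unfolding comps_def by blast

lemma comps_subset: "C \<in> comps ends V F \<Longrightarrow> C \<subseteq> V"
  unfolding comps_def comp_of_def by blast

lemma comps_disjoint: "C1 \<in> comps ends V F \<Longrightarrow> C2 \<in> comps ends V F \<Longrightarrow> y \<in> C1 \<Longrightarrow> y \<in> C2 \<Longrightarrow> C1 = C2"
  using comps_eq_comp_of by metis

lemma comp_edges_subset: "comp_edges ends F C \<subseteq> F"
  unfolding comp_edges_def by blast

lemma verts_comp_edges_subset: "verts ends (comp_edges ends F C) \<subseteq> C"
  unfolding comp_edges_def verts_def by blast

lemma Delta_comp_eq_delta:
  "verts ends (comp_edges ends F C) = C \<Longrightarrow> Delta_comp ends F C = delta ends (comp_edges ends F C)"
  unfolding Delta_comp_def delta_def by simp

definition tree_comps :: "('e \<Rightarrow> 'v set) \<Rightarrow> 'v set \<Rightarrow> 'e set \<Rightarrow> 'v set set" where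
  "tree_comps ends V F = {C \<in> comps ends V F. Delta_comp ends F C = -1}"

lemma tree_count_eq_card: "tree_count ends V F = card (tree_comps ends V F)"
  by (simp add: tree_count_def tree_comps_def)

locale multigraph_on =
  fixes E :: "'e set" and ends :: "'e \<Rightarrow> 'v set"
  assumes multigraph: "multigraph E ends"
begin

abbreviation VE :: "'v set" where "VE \<equiv> verts ends E"

lemma finite_E: "finite E"
  using multigraph by (simp add: multigraph_def)

lemma finite_ends: "f \<in> E \<Longrightarrow> finite (ends f)"
  using multigraph by (simp add: multigraph_def)

lemma card_ends: "f \<in> E \<Longrightarrow> 1 \<le> card (ends f) \<and> card (ends f) \<le> 2"
  using multigraph by (simp add: multigraph_def)

lemma ends_nonempty: "f \<in> E \<Longrightarrow> ends f \<noteq> {}"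
  using card_ends by fastforce

lemma finite_edges: "X \<subseteq> E \<Longrightarrow> finite X"
  using finite_E finite_subset by blast

lemma finite_verts: "X \<subseteq> E \<Longrightarrow> finite (verts ends X)"
  unfolding verts_def using finite_edges finite_ends by blast

lemma obtain_other_end:
  assumes "f \<in> E" "u \<in> ends f" "card (ends f) = 2"
  obtains y where "ends f = {u, y}" "y \<noteq> u"
proof -
  obtain a b where ab: "ends f = {a, b}" "a \<noteq> b" using assms(3) by (meson card_2_iff)
  then show ?thesis using that assms(2) by (metis insert_commute insertE singletonD)
qed

lemma card_ends_Diff_le_1:
  assumes "f \<in> E" "ends f \<inter> S \<noteq> {}"
  shows "card (ends f - S) \<le> 1"
proof -
  obtain x where x: "x \<in> ends f" "x \<in> S" using assms(2) by blast
  have "card (ends f - S) \<le> card (ends f - {x})"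
    using x finite_ends[OF assms(1)] by (intro card_mono) auto
  also have "\<dots> = card (ends f) - 1" using x by simp
  finally show ?thesis using card_ends[OF assms(1)] by linarith
qed

lemma delta_singleton: "f \<in> E \<Longrightarrow> delta ends {f} = 1 - int (card (ends f))"
  by (simp add: delta_def verts_def)

lemma delta_singleton_ge:
  assumes "f \<in> E"
  shows "-1 \<le> delta ends {f}"
  using delta_singleton[OF assms] card_ends[OF assms] by linarith

lemma delta_Diff_singleton_ge:
  assumes "X \<subseteq> E" "f \<in> X"
  shows "delta ends X - 1 \<le> delta ends (X - {f})"
proof -
  have "card (verts ends (X - {f})) \<le> card (verts ends X)"
    using assms finite_verts by (intro card_mono) (auto simp: verts_def)
  moreover have "Suc (card (X - {f})) = card X"
    using card_Suc_Diff1[OF finite_edges[OF assms(1)] assms(2)] .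
  ultimately show ?thesis unfolding delta_def by linarith
qed

lemma delta_supermodular:
  assumes "X \<subseteq> E" "Y \<subseteq> E"
  shows "delta ends X + delta ends Y \<le> delta ends (X \<union> Y) + delta ends (X \<inter> Y)"
proof -
  have "card (X \<union> Y) + card (X \<inter> Y) = card X + card Y"
    using card_Un_Int finite_edges assms by metis
  moreover have "card (verts ends X \<union> verts ends Y) + card (verts ends X \<inter> verts ends Y)
      = card (verts ends X) + card (verts ends Y)"
    using card_Un_Int finite_verts assms by metis
  moreover have "card (verts ends (X \<inter> Y)) \<le> card (verts ends X \<inter> verts ends Y)"
    using assms finite_verts by (intro card_mono) (auto simp: verts_def)
  ultimately show ?thesis unfolding delta_def verts_Un by linarith
qed

lemma delta_Un_disjoint:
  assumes "X \<subseteq> E" "Y \<subseteq> E" "verts ends X \<inter> verts ends Y = {}"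
  shows "delta ends (X \<union> Y) = delta ends X + delta ends Y"
proof -
  have "X \<inter> Y = {}"
  proof (rule equals0I)
    fix f assume f: "f \<in> X \<inter> Y"
    then obtain v where "v \<in> ends f" using ends_nonempty assms(1) by blast
    then have "v \<in> verts ends X \<inter> verts ends Y" using f by (auto simp: mem_verts_iff)
    then show False using assms(3) by simp
  qed
  then have "card (X \<union> Y) = card X + card Y"
    using finite_edges assms card_Un_disjoint by metis
  moreover have "card (verts ends X \<union> verts ends Y) = card (verts ends X) + card (verts ends Y)"
    using assms finite_verts card_Un_disjoint by metis
  ultimately show ?thesis unfolding delta_def verts_Un by simp
qed

section \<open>Critical edge sets and the circuits of \<open>M_k\<close>\<close>

text \<open>Take \<open>N\<close> of minimum cardinality; as removing one edge lowers \<open>delta\<close> by at most one,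
  \<open>delta N = c\<close> unless \<open>N = W\<close>.\<close>
lemma obtain_minimal_dense:
  assumes "W \<subseteq> S" "S \<subseteq> E" "c \<le> delta ends S"
  obtains N where "W \<subseteq> N" "N \<subseteq> S" "c \<le> delta ends N" "N \<noteq> W \<Longrightarrow> delta ends N = c"
    "\<And>D. W \<subseteq> D \<Longrightarrow> D \<subset> N \<Longrightarrow> delta ends D < c"
proof -
  let ?P = "\<lambda>Y. W \<subseteq> Y \<and> Y \<subseteq> S \<and> c \<le> delta ends Y"
  obtain N where N: "W \<subseteq> N" "N \<subseteq> S" "c \<le> delta ends N"
    and min: "\<And>Y. ?P Y \<Longrightarrow> card N \<le> card Y"
    using ex_has_least_nat[of ?P S card] assms by blast
  have NE: "N \<subseteq> E" using N assms by blast
  have smaller: "delta ends D < c" if D: "W \<subseteq> D" "D \<subset> N" for D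
  proof -
    have "card D < card N" using psubset_card_mono[OF finite_edges[OF NE] D(2)] .
    then have "\<not> ?P D" using min[of D] by linarith
    then show ?thesis using D N by auto
  qed
  have eq: "delta ends N = c" if "N \<noteq> W"
  proof -
    obtain f where f: "f \<in> N" "f \<notin> W" using \<open>N \<noteq> W\<close> N by blast
    then have "delta ends (N - {f}) < c" using smaller[of "N - {f}"] N by blast
    then show ?thesis using delta_Diff_singleton_ge[OF NE f(1)] N by linarith
  qed
  show thesis by (rule that[OF N eq smaller])
qed

lemma obtain_subset_delta_eq:
  assumes "D \<subseteq> E" "int k \<le> delta ends D" "k \<ge> 1"
  obtains N where "N \<subseteq> D" "N \<noteq> {}" "delta ends N = int k"
proof -
  obtain N where N: "{} \<subseteq> N" "N \<subseteq> D" "int k \<le> delta ends N"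
    "N \<noteq> {} \<Longrightarrow> delta ends N = int k" "\<And>D'. {} \<subseteq> D' \<Longrightarrow> D' \<subset> N \<Longrightarrow> delta ends D' < int k"
    by (rule obtain_minimal_dense[OF empty_subsetI assms(1,2)]) blast
  have "N \<noteq> {}" using N(3) assms(3) by auto
  with N show thesis using that by blast
qed

lemma delta_eq_iff_card: "delta ends D = int k \<longleftrightarrow> card D = card (verts ends D) + k"
  unfolding delta_def by linarith

lemma Mk_circuits_iff:
  assumes "k \<ge> 1"
  shows "C \<in> Mk_circuits E ends k \<longleftrightarrow> C \<subseteq> E \<and> delta ends C = int k \<and> delta_critical ends C"
proof
  assume C: "C \<in> Mk_circuits E ends k"
  then have CE: "C \<subseteq> E" and dC: "delta ends C = int k"
    and min: "\<And>D. D \<subset> C \<Longrightarrow> \<not> (D \<noteq> {} \<and> delta ends D = int k)"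
    unfolding Mk_circuits_def delta_eq_iff_card by blast+
  have "delta ends D < delta ends C" if D: "D \<subset> C" for D
  proof (rule ccontr)
    assume "\<not> delta ends D < delta ends C"
    moreover have "D \<subseteq> E" using D CE by blast
    ultimately obtain N where "N \<subseteq> D" "N \<noteq> {}" "delta ends N = int k"
      using obtain_subset_delta_eq[of D k] dC assms by auto
    then show False using min[of N] D by blast
  qed
  then show "C \<subseteq> E \<and> delta ends C = int k \<and> delta_critical ends C"
    using CE dC unfolding delta_critical_def by blast
next
  assume C: "C \<subseteq> E \<and> delta ends C = int k \<and> delta_critical ends C"
  then have "C \<noteq> {}" using assms by auto
  moreover have "\<not> (D \<noteq> {} \<and> delta ends D = int k)" if "D \<subset> C" for D
    using delta_criticalD[OF _ that] C by fastforce
  ultimately show "C \<in> Mk_circuits E ends k"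
    using C unfolding Mk_circuits_def mem_Collect_eq delta_eq_iff_card[symmetric] by blast
qed

lemma critical_extend_to_delta:
  assumes WK: "W \<subseteq> K" and KE: "K \<subseteq> E" and W: "delta_critical ends W"
    and dW: "delta ends W \<le> int k" and dK: "int k \<le> delta ends K"
  obtains X where "W \<subseteq> X" "X \<subseteq> K" "delta_critical ends X" "delta ends X = int k"
proof -
  obtain X where WX: "W \<subseteq> X" and XK: "X \<subseteq> K" and dX: "int k \<le> delta ends X"
    and eq: "X \<noteq> W \<Longrightarrow> delta ends X = int k"
    and min: "\<And>D. W \<subseteq> D \<Longrightarrow> D \<subset> X \<Longrightarrow> delta ends D < int k"
    by (rule obtain_minimal_dense[OF WK KE dK]) blast
  show thesis
  proof (cases "X = W")
    case True
    then have "delta ends X = int k" using dW dX by simp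
    then show thesis using that[OF WX XK] W True by simp
  next
    case False
    have "delta ends D < delta ends X" if D: "D \<subset> X" for D
    proof -
      have "D \<subseteq> E" "W \<subseteq> E" using D WX XK KE by auto
      then have sup: "delta ends D + delta ends W \<le> delta ends (D \<union> W) + delta ends (D \<inter> W)"
        by (rule delta_supermodular)
      show ?thesis
      proof (cases "D \<union> W = X")
        case True
        then have "D \<inter> W \<subset> W" using D by blast
        then have "delta ends (D \<inter> W) < delta ends W" by (rule delta_criticalD[OF W])
        then show ?thesis using sup unfolding True by linarith
      next
        case False
        then have "D \<union> W \<subset> X" using D WX by blast
        then have "delta ends (D \<union> W) < int k" using min[of "D \<union> W"] by simp
        moreover have "delta ends (D \<inter> W) \<le> delta ends W"
        proof (cases "D \<inter> W = W")
          case False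
          then have "D \<inter> W \<subset> W" by blast
          then show ?thesis using delta_criticalD[OF W] by (meson less_imp_le)
        qed simp
        ultimately show ?thesis using sup eq \<open>X \<noteq> W\<close> by linarith
      qed
    qed
    then have "delta_critical ends X" unfolding delta_critical_def by blast
    with eq[OF False] show thesis using that[OF WX XK] by simp
  qed
qed

text \<open>Two minimal dense subsets, one avoiding \<open>e\<close> and one avoiding an edge \<open>f\<close> of the first,
  cannot both miss \<open>e\<close>: by supermodularity their intersection would be a smaller
  dense set avoiding \<open>e\<close>.\<close>
lemma critical_shrink_step:
  assumes WE: "W \<subseteq> E" and W: "delta_critical ends W" and e: "e \<in> W"
    and two: "2 \<le> delta ends W"
  obtains W' where "W' \<subseteq> W" "delta_critical ends W'" "e \<in> W'"
    "delta ends W' = delta ends W - 1"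
proof -
  define j where "j = delta ends W"
  have proper: "delta ends D \<le> j - 1" if "D \<subset> W" for D
    using delta_criticalD[OF W that] j_def by linarith
  have dense: "j - 1 \<le> delta ends (W - {x})" if "x \<in> W" for x
    using delta_Diff_singleton_ge[OF WE that] j_def by simp
  have sub: "W - {x} \<subseteq> E" for x using WE by blast
  obtain N where NW: "N \<subseteq> W - {e}" and dN: "j - 1 \<le> delta ends N"
    and minN: "\<And>D. {} \<subseteq> D \<Longrightarrow> D \<subset> N \<Longrightarrow> delta ends D < j - 1"
    by (rule obtain_minimal_dense[OF empty_subsetI sub dense[OF e]]) blast
  have "N \<noteq> {}" using dN two j_def by auto
  then obtain f where fN: "f \<in> N" by blast
  have fW: "f \<in> W" using fN NW by blast
  obtain M where MW: "M \<subseteq> W - {f}" and dM: "j - 1 \<le> delta ends M"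
    and minM: "\<And>D. {} \<subseteq> D \<Longrightarrow> D \<subset> M \<Longrightarrow> delta ends D < j - 1"
    by (rule obtain_minimal_dense[OF empty_subsetI sub dense[OF fW]]) blast
  have MW': "M \<subset> W" using MW fW by blast
  have dM': "delta ends M = j - 1" using proper[OF MW'] dM by linarith
  have "e \<in> M"
  proof (rule ccontr)
    assume "e \<notin> M"
    then have "M \<union> N \<subset> W" using MW NW e by blast
    then have "delta ends (M \<union> N) \<le> j - 1" by (rule proper)
    moreover have "M \<subseteq> E" "N \<subseteq> E" using MW NW WE by auto
    then have "delta ends M + delta ends N \<le> delta ends (M \<union> N) + delta ends (M \<inter> N)"
      by (rule delta_supermodular)
    moreover have "M \<inter> N \<subset> N" using fN MW by blast
    then have "delta ends (M \<inter> N) < j - 1" using minN by blast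
    ultimately show False using dM' dN by linarith
  qed
  moreover have "delta_critical ends M"
    unfolding delta_critical_def using minM dM' by simp
  ultimately show thesis using that MW' dM' j_def by blast
qed

lemma critical_shrink_to_delta:
  assumes "W \<subseteq> E" "delta_critical ends W" "e \<in> W" "1 \<le> k" "int k \<le> delta ends W"
  obtains W' where "W' \<subseteq> W" "delta_critical ends W'" "e \<in> W'" "delta ends W' = int k"
  using assms
proof (induction "nat (delta ends W - int k)" arbitrary: W)
  case 0
  then have "delta ends W = int k" by linarith
  with "0.prems"(1)[OF order_refl] "0.prems"(3,4) show ?case .
next
  case (Suc n W)
  then have "2 \<le> delta ends W" by linarith
  then obtain W1 where W1: "W1 \<subseteq> W" "delta_critical ends W1" "e \<in> W1"
    "delta ends W1 = delta ends W - 1"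
    using critical_shrink_step[OF Suc.prems(2-4)] by metis
  show ?case
  proof (rule Suc.hyps(1))
    show "n = nat (delta ends W1 - int k)" using Suc.hyps(2) W1(4) by linarith
    show "W1 \<subseteq> E" using W1(1) Suc.prems(2) by (rule order_trans)
    show "int k \<le> delta ends W1" using Suc.hyps(2) W1(4) by linarith
    show "delta_critical ends W1" "e \<in> W1" "1 \<le> k" by (fact W1(2), fact W1(3), fact Suc.prems(5))
    fix W' assume "W' \<subseteq> W1" "delta_critical ends W'" "e \<in> W'" "delta ends W' = int k"
    then show thesis using Suc.prems(1) W1(1) by (meson order_trans)
  qed
qed

lemma delta_le_Un_critical:
  assumes "N \<subseteq> E" "C \<subseteq> E" "delta_critical ends N"
  shows "delta ends C \<le> delta ends (N \<union> C)"
proof (cases "N \<subseteq> C")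
  case False
  then have "N \<inter> C \<subset> N" by blast
  then have "delta ends (N \<inter> C) < delta ends N" by (rule delta_criticalD[OF assms(3)])
  moreover have "delta ends N + delta ends C \<le> delta ends (N \<union> C) + delta ends (N \<inter> C)"
    by (rule delta_supermodular[OF assms(1,2)])
  ultimately show ?thesis by linarith
qed (simp add: Un_absorb1)

lemma card_verts_Diff_insert_le:
  assumes "Y \<subseteq> E" "f \<in> Y" "ends f \<inter> verts ends D \<noteq> {}"
  shows "card (verts ends Y - verts ends D) \<le> card (verts ends Y - verts ends (insert f D)) + 1"
proof -
  have fE: "f \<in> E" using assms by blast
  have "verts ends Y - verts ends D
      \<subseteq> (verts ends Y - verts ends (insert f D)) \<union> (ends f - verts ends D)"
    by (auto simp: verts_insert)
  then have "card (verts ends Y - verts ends D)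
      \<le> card ((verts ends Y - verts ends (insert f D)) \<union> (ends f - verts ends D))"
    using finite_verts[OF assms(1)] finite_ends[OF fE] by (intro card_mono) auto
  also have "\<dots> \<le> card (verts ends Y - verts ends (insert f D)) + card (ends f - verts ends D)"
    by (rule card_Un_le)
  finally show ?thesis using card_ends_Diff_le_1[OF fE assms(3)] by linarith
qed

text \<open>Growing \<open>D\<close> inside a connected \<open>Y\<close> one edge at a time, each new edge
  contributes at most one new vertex.\<close>
lemma card_verts_Diff_le:
  assumes "connected_edges ends Y" "Y \<subseteq> E" "D \<subseteq> Y" "D \<noteq> {}"
  shows "card (verts ends Y - verts ends D) \<le> card (Y - D)"
  using assms(3,4)
proof (induction "card (Y - D)" arbitrary: D rule: less_induct)
  case less
  show ?case
  proof (cases "D = Y")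
    case False
    then have "D \<subset> Y" using less.prems(1) by blast
    then have "\<exists>f\<in>Y - D. ends f \<inter> verts ends D \<noteq> {}"
      by (rule connected_edgesD[OF assms(1) less.prems(2)])
    then obtain f where f: "f \<in> Y - D" "ends f \<inter> verts ends D \<noteq> {}" by blast
    have card: "card (Y - D) = Suc (card (Y - insert f D))"
      by (rule card_Diff_insert_Suc[OF finite_edges[OF assms(2)] f(1)])
    have "insert f D \<subseteq> Y" using f(1) less.prems(1) by blast
    then have "card (verts ends Y - verts ends (insert f D)) \<le> card (Y - insert f D)"
      using less.hyps[OF _ _ insert_not_empty] card by simp
    then show ?thesis using card_verts_Diff_insert_le[OF assms(2) _ f(2)] f(1) card by simp
  qed simp
qed

lemma is_leaf_new_vertex:
  assumes "f \<in> E" "ends f \<inter> verts ends D \<noteq> {}" "u \<in> ends f" "u \<notin> verts ends D"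
  shows "is_leaf ends (verts ends (insert f D)) (insert f D) u f"
proof (rule is_leaf_in_verts)
  obtain x where x: "x \<in> ends f" "x \<in> verts ends D" using assms(2) by blast
  then have "x \<noteq> u" using assms(4) by blast
  then have "card {x, u} \<le> card (ends f)"
    using x(1) assms(3) finite_ends[OF assms(1)] by (intro card_mono) auto
  then show "card (ends f) = 2" using \<open>x \<noteq> u\<close> card_ends[OF assms(1)] by simp
  show "\<forall>g\<in>insert f D. u \<in> ends g \<longrightarrow> g = f" using assms(4) by (auto simp: mem_verts_iff)
qed (use assms(3) in auto)

lemma card_verts_Diff_less:
  assumes "connected_edges ends Y" "Y \<subseteq> E" "D \<subseteq> Y" "D \<noteq> {}" "D \<noteq> Y"
    and leaves: "\<And>u f. is_leaf ends (verts ends Y) Y u f \<Longrightarrow> u \<in> verts ends D"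
  shows "card (verts ends Y - verts ends D) < card (Y - D)"
  using assms(3-5) leaves
proof (induction "card (Y - D)" arbitrary: D rule: less_induct)
  case less
  note leaves = less.prems(4)
  have "D \<subset> Y" using less.prems(1,3) by blast
  then have "\<exists>f\<in>Y - D. ends f \<inter> verts ends D \<noteq> {}"
    by (rule connected_edgesD[OF assms(1) less.prems(2)])
  then obtain f where f: "f \<in> Y - D" "ends f \<inter> verts ends D \<noteq> {}" by blast
  have fE: "f \<in> E" using f(1) assms(2) by blast
  have card: "card (Y - D) = Suc (card (Y - insert f D))"
    by (rule card_Diff_insert_Suc[OF finite_edges[OF assms(2)] f(1)])
  show ?case
  proof (cases "insert f D = Y")
    case True
    have "ends f \<subseteq> verts ends D"
      using is_leaf_new_vertex[OF fE f(2)] leaves unfolding True by blast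
    then have "verts ends Y - verts ends D = {}"
      using True verts_insert[of ends f D] by auto
    then show ?thesis using card by (simp only: card.empty)
  next
    case False
    have "insert f D \<subseteq> Y" using f(1) less.prems(1) by blast
    moreover have "\<And>u g. is_leaf ends (verts ends Y) Y u g \<Longrightarrow> u \<in> verts ends (insert f D)"
      using leaves by (auto simp: verts_insert)
    ultimately have "card (verts ends Y - verts ends (insert f D)) < card (Y - insert f D)"
      using less.hyps[OF _ _ insert_not_empty False] card by simp
    then show ?thesis using card_verts_Diff_insert_le[OF assms(2) _ f(2)] f(1) card by simp
  qed
qed

lemma card_split_subset:
  assumes "D \<subseteq> Y" "Y \<subseteq> E"
  shows "card Y = card D + card (Y - D)"
    and "card (verts ends Y) = card (verts ends D) + card (verts ends Y - verts ends D)"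
proof -
  have "finite Y" using assms finite_edges by blast
  then show "card Y = card D + card (Y - D)"
    using assms(1) by (metis card_Diff_subset card_mono finite_subset le_add_diff_inverse)
  have "verts ends D \<subseteq> verts ends Y" using assms(1) by (rule verts_mono)
  then show "card (verts ends Y) = card (verts ends D) + card (verts ends Y - verts ends D)"
    using finite_verts[OF assms(2)]
    by (metis card_Diff_subset card_mono finite_subset le_add_diff_inverse)
qed

lemma delta_le_connected:
  assumes "connected_edges ends Y" "Y \<subseteq> E" "D \<subseteq> Y" "D \<noteq> {}"
  shows "delta ends D \<le> delta ends Y"
  using card_verts_Diff_le[OF assms] card_split_subset[OF assms(3,2)] unfolding delta_def by linarith

lemma delta_less_connected:
  assumes "connected_edges ends Y" "Y \<subseteq> E" "D \<subseteq> Y" "D \<noteq> {}" "D \<noteq> Y"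
    and leaves: "\<And>u f. is_leaf ends (verts ends Y) Y u f \<Longrightarrow> u \<in> verts ends D"
  shows "delta ends D < delta ends Y"
proof -
  have "card (verts ends Y - verts ends D) < card (Y - D)"
    using leaves by (rule card_verts_Diff_less[OF assms(1-5)])
  then show ?thesis using card_split_subset[OF assms(3,2)] unfolding delta_def by linarith
qed

lemma obtain_leaf_other_end:
  assumes "connected_edges ends Y" "Y \<subseteq> E" "is_leaf ends (verts ends Y) Y u f" "Y - {f} \<noteq> {}"
  obtains y where "ends f = {u, y}" "y \<noteq> u" "y \<in> verts ends (Y - {f})"
    "u \<notin> verts ends (Y - {f})"
proof -
  have fY: "f \<in> Y" and uf: "u \<in> ends f" and c2: "card (ends f) = 2"
    and only: "\<forall>g\<in>Y. u \<in> ends g \<longrightarrow> g = f"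
    using is_leafD[OF assms(3)] by auto
  have fE: "f \<in> E" using fY assms(2) by blast
  obtain y where y: "ends f = {u, y}" "y \<noteq> u" using obtain_other_end[OF fE uf c2] .
  have u: "u \<notin> verts ends (Y - {f})" using only by (auto simp: mem_verts_iff)
  have "Y - {f} \<subset> Y" using fY by blast
  then have "\<exists>g\<in>Y - (Y - {f}). ends g \<inter> verts ends (Y - {f}) \<noteq> {}"
    by (rule connected_edgesD[OF assms(1,4)])
  then have "ends f \<inter> verts ends (Y - {f}) \<noteq> {}" using fY by (simp add: Diff_Diff_Int)
  then have "y \<in> verts ends (Y - {f})" using y u by auto
  then show thesis by (rule that[OF y _ u])
qed

lemma verts_Diff_leaf:
  assumes "connected_edges ends Y" "Y \<subseteq> E" "is_leaf ends (verts ends Y) Y u f" "Y - {f} \<noteq> {}"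
  shows "verts ends (Y - {f}) = verts ends Y - {u}"
proof -
  obtain y where y: "ends f = {u, y}" "y \<noteq> u" "y \<in> verts ends (Y - {f})"
    "u \<notin> verts ends (Y - {f})"
    by (rule obtain_leaf_other_end[OF assms])
  have "insert f (Y - {f}) = Y" using is_leafD[OF assms(3)] by blast
  then have "verts ends Y = ends f \<union> verts ends (Y - {f})" using verts_insert[of ends f "Y - {f}"] by simp
  then show ?thesis using y(1,3,4) by auto
qed

lemma connected_edges_Diff_leaf:
  assumes c: "connected_edges ends Y" and "Y \<subseteq> E" and leaf: "is_leaf ends (verts ends Y) Y u f"
    and "Y - {f} \<noteq> {}"
  shows "connected_edges ends (Y - {f})"
  unfolding connected_edges_def
proof (intro allI impI)
  fix D assume D: "D \<noteq> {}" "D \<subset> Y - {f}"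
  obtain y where y: "ends f = {u, y}" "y \<noteq> u" "y \<in> verts ends (Y - {f})"
    "u \<notin> verts ends (Y - {f})"
    by (rule obtain_leaf_other_end[OF assms])
  have fY: "f \<in> Y" and only_f: "\<forall>g\<in>Y. u \<in> ends g \<longrightarrow> g = f"
    using is_leafD[OF leaf] by auto
  have "verts ends D \<subseteq> verts ends (Y - {f})" using D(2) by (intro verts_mono) blast
  then have uD: "u \<notin> verts ends D" using y(4) by blast
  have "D \<subset> Y" using D(2) by blast
  then have "\<exists>h\<in>Y - D. ends h \<inter> verts ends D \<noteq> {}" by (rule connected_edgesD[OF c D(1)])
  then obtain h where h: "h \<in> Y - D" "ends h \<inter> verts ends D \<noteq> {}" by blast
  show "\<exists>h\<in>Y - {f} - D. ends h \<inter> verts ends D \<noteq> {}"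
  proof (cases "h = f")
    case False
    then show ?thesis using h by blast
  next
    case True
    then have yD: "y \<in> verts ends D" using h(2) y(1) uD by auto
    have "insert f D \<subset> Y" using D(2) fY by blast
    then have "\<exists>h'\<in>Y - insert f D. ends h' \<inter> verts ends (insert f D) \<noteq> {}"
      by (rule connected_edgesD[OF c insert_not_empty])
    then obtain h' where h': "h' \<in> Y - insert f D" "ends h' \<inter> verts ends (insert f D) \<noteq> {}"
      by blast
    have "u \<notin> ends h'" using h'(1) only_f by blast
    then have "ends h' \<inter> verts ends D \<noteq> {}"
      using h'(2) y(1) yD unfolding verts_insert by auto
    then show ?thesis using h'(1) by blast
  qed
qed

lemma delta_Diff_leaf:
  assumes "connected_edges ends Y" "Y \<subseteq> E" "is_leaf ends (verts ends Y) Y u f" "Y - {f} \<noteq> {}"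
  shows "delta ends (Y - {f}) = delta ends Y"
proof -
  have fY: "f \<in> Y" and uY: "u \<in> verts ends Y" using is_leafD[OF assms(3)] by auto
  have "Suc (card (Y - {f})) = card Y"
    by (rule card_Suc_Diff1[OF finite_edges[OF assms(2)] fY])
  moreover have "Suc (card (verts ends Y - {u})) = card (verts ends Y)"
    by (rule card_Suc_Diff1[OF finite_verts[OF assms(2)] uY])
  ultimately show ?thesis unfolding delta_def verts_Diff_leaf[OF assms] by linarith
qed

text \<open>Peeling leaves of \<open>Y\<close> outside \<open>N\<close> keeps \<open>delta\<close> and connectivity; once every
  leaf lies in \<open>N\<close>, \<open>delta_less_connected\<close> forces \<open>Y = N\<close>.\<close>
lemma subset_if_leaves_in_dense:
  assumes "connected_edges ends Y" "Y \<subseteq> E" "N \<subseteq> Y" "N \<noteq> {}" "delta ends Y \<le> delta ends N"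
    "Z \<subseteq> Y" and leaves: "\<And>u g. is_leaf ends (verts ends Z) Z u g \<Longrightarrow> u \<in> verts ends N"
  shows "Z \<subseteq> N"
  using assms(1-6)
proof (induction "card (Y - N)" arbitrary: Y rule: less_induct)
  case less
  show ?case
  proof (cases "N = Y")
    case False
    have "\<not> (\<forall>u f. is_leaf ends (verts ends Y) Y u f \<longrightarrow> u \<in> verts ends N)"
    proof
      assume "\<forall>u f. is_leaf ends (verts ends Y) Y u f \<longrightarrow> u \<in> verts ends N"
      then have "delta ends N < delta ends Y"
        by (intro delta_less_connected[OF less.prems(1-4) False]) blast
      then show False using less.prems(5) by linarith
    qed
    then obtain u f where leaf: "is_leaf ends (verts ends Y) Y u f" and uN: "u \<notin> verts ends N"
      by blast
    have fY: "f \<in> Y" and uf: "u \<in> ends f" using is_leafD[OF leaf] by auto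
    have fN: "f \<notin> N" using uN uf by (auto simp: mem_verts_iff)
    have ne: "Y - {f} \<noteq> {}" using less.prems(3,4) fN by blast
    have fZ: "f \<notin> Z"
    proof
      assume "f \<in> Z"
      then have "is_leaf ends (verts ends Z) Z u f" by (rule is_leaf_subset[OF leaf less.prems(6)])
      then show False using leaves uN by blast
    qed
    show ?thesis
    proof (rule less.hyps)
      show "card (Y - {f} - N) < card (Y - N)"
        using fY fN finite_edges[OF less.prems(2)] by (intro psubset_card_mono) auto
      show "connected_edges ends (Y - {f})"
        by (rule connected_edges_Diff_leaf[OF less.prems(1,2) leaf ne])
      show "delta ends (Y - {f}) \<le> delta ends N"
        using delta_Diff_leaf[OF less.prems(1,2) leaf ne] less.prems(5) by simp
    qed (use less.prems fN fZ in auto)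
  qed (use less.prems in simp)
qed

text \<open>Otherwise, by \<open>subset_if_leaves_in_dense\<close>, \<open>Z\<close> would be a single edge through \<open>w\<close>,
  whose two ends are both leaves.\<close>
lemma obtain_leaf_avoiding:
  assumes Y: "connected_edges ends Y" "Y \<subseteq> E" "delta ends Y = -1" and Z: "Z \<subseteq> Y" "Z \<noteq> {}"
  obtains u g where "is_leaf ends (verts ends Z) Z u g" "u \<noteq> w"
proof (rule ccontr)
  assume no: "\<not> thesis"
  note avoiding = that
  have leaves: "u = w" if "is_leaf ends (verts ends Z) Z u g" for u g
    using avoiding[OF that] no by blast
  have "\<exists>h\<in>Z. w \<in> verts ends Z \<longrightarrow> w \<in> ends h" using Z(2) by (auto simp: mem_verts_iff)
  then obtain h where h: "h \<in> Z" "w \<in> verts ends Z \<Longrightarrow> w \<in> ends h" by blast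
  have hE: "h \<in> E" using h(1) Z(1) Y(2) by blast
  have "Z \<subseteq> {h}"
  proof (rule subset_if_leaves_in_dense[OF Y(1,2)])
    show "{h} \<subseteq> Y" "{h} \<noteq> {}" "Z \<subseteq> Y" using h(1) Z(1) by auto
    show "delta ends Y \<le> delta ends {h}" using Y(3) delta_singleton_ge[OF hE] by simp
    fix u g assume leaf: "is_leaf ends (verts ends Z) Z u g"
    have "u \<in> verts ends Z" using is_leafD[OF leaf] by blast
    moreover have "u = w" by (rule leaves[OF leaf])
    ultimately show "u \<in> verts ends {h}" using h(2) by (simp add: verts_def)
  qed
  then have Zh: "Z = {h}" using h(1) by blast
  have "delta ends {h} \<le> delta ends Y" using delta_le_connected[OF Y(1,2)] h(1) Z(1) by blast
  then have c2: "card (ends h) = 2" using Y(3) delta_singleton[OF hE] card_ends[OF hE] by simp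
  then obtain a b where ab: "ends h = {a, b}" "a \<noteq> b" by (meson card_2_iff)
  have "is_leaf ends (verts ends {h}) {h} a h" "is_leaf ends (verts ends {h}) {h} b h"
    by (rule is_leaf_in_verts; use ab(1) c2 in simp)+
  then have "a = w" "b = w" using leaves[unfolded Zh] by blast+
  then show False using ab(2) by simp
qed

lemma finite_comps: "finite (comps ends VE F)"
  unfolding comps_def using finite_verts[of E] by blast

lemma ends_subset_comp:
  assumes FE: "F \<subseteq> E" and g: "g \<in> F" "v \<in> ends g" "v \<in> C" and C: "C \<in> comps ends VE F"
  shows "ends g \<subseteq> C"
proof
  fix w assume w: "w \<in> ends g"
  have "(v, w) \<in> adj ends F" using g(1,2) w by (rule adjI)
  moreover have "w \<in> VE" using g(1) FE w by (auto simp: mem_verts_iff)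
  ultimately have "w \<in> comp_of ends VE F v" by (simp add: mem_comp_of_iff)
  then show "w \<in> C" using comps_eq_comp_of[OF C g(3)] by simp
qed

lemma comp_edgesI:
  "F \<subseteq> E \<Longrightarrow> g \<in> F \<Longrightarrow> v \<in> ends g \<Longrightarrow> v \<in> C \<Longrightarrow> C \<in> comps ends VE F \<Longrightarrow> g \<in> comp_edges ends F C"
  using ends_subset_comp unfolding comp_edges_def by blast

lemma connected_comp_edges:
  assumes FE: "F \<subseteq> E" and C: "C \<in> comps ends VE F"
  shows "connected_edges ends (comp_edges ends F C)"
  unfolding connected_edges_def
proof (intro allI impI)
  let ?EC = "comp_edges ends F C"
  fix D assume D: "D \<noteq> {}" "D \<subset> ?EC"
  show "\<exists>f\<in>?EC - D. ends f \<inter> verts ends D \<noteq> {}"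
  proof (rule ccontr)
    assume none: "\<not> (\<exists>f\<in>?EC - D. ends f \<inter> verts ends D \<noteq> {})"
    have VD: "verts ends D \<subseteq> C"
      using D(2) verts_comp_edges_subset[of ends F C] verts_mono[of D ?EC ends] by blast
    have closed: "ends g \<subseteq> verts ends D" if "g \<in> F" "y \<in> ends g" "y \<in> verts ends D" for g y
    proof -
      have "g \<in> ?EC" using comp_edgesI[OF FE that(1,2) _ C] VD that(3) by blast
      then have "g \<in> D" using none that(2,3) by blast
      then show ?thesis by (auto simp: mem_verts_iff)
    qed
    have DE: "D \<subseteq> E" using D(2) FE comp_edges_subset[of ends F C] by blast
    obtain f0 where f0: "f0 \<in> ?EC" "f0 \<notin> D" using D(2) by blast
    then have "f0 \<in> E" using FE comp_edges_subset[of ends F C] by blast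
    then obtain u where u: "u \<in> ends f0" using ends_nonempty by blast
    obtain d0 where d0: "d0 \<in> D" using D(1) by blast
    then obtain d where "d \<in> ends d0" using ends_nonempty DE by blast
    then have dD: "d \<in> verts ends D" using d0 by (auto simp: mem_verts_iff)
    then have "C = comp_of ends VE F d" using VD by (intro comps_eq_comp_of[OF C]) blast
    moreover have "u \<in> C" using u f0(1) unfolding comp_edges_def by blast
    ultimately have "(d, u) \<in> (adj ends F)\<^sup>*" by (simp add: mem_comp_of_iff)
    then have "u \<in> verts ends D" using dD closed by (rule rtrancl_adj_closed)
    then show False using none f0 u by blast
  qed
qed

lemma comp_vert_in_comp_edges:
  assumes FE: "F \<subseteq> E" and C: "C \<in> comps ends VE F" and "x \<in> C" "y \<in> C" "x \<noteq> y"
  shows "x \<in> verts ends (comp_edges ends F C)"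
proof -
  have "C = comp_of ends VE F x" by (rule comps_eq_comp_of[OF C assms(3)])
  then have "(x, y) \<in> (adj ends F)\<^sup>*" using assms(4) by (simp add: mem_comp_of_iff)
  then obtain z where "(x, z) \<in> adj ends F" using assms(5) by (blast elim: converse_rtranclE)
  then obtain g where g: "g \<in> F" "x \<in> ends g" by (blast dest: adjD)
  have "g \<in> comp_edges ends F C" by (rule comp_edgesI[OF FE g assms(3) C])
  then show ?thesis using g(2) by (auto simp: mem_verts_iff)
qed

lemma verts_comp_edges_nonempty:
  assumes FE: "F \<subseteq> E" and C: "C \<in> comps ends VE F" and ne: "comp_edges ends F C \<noteq> {}"
  shows "verts ends (comp_edges ends F C) = C"
proof
  show "verts ends (comp_edges ends F C) \<subseteq> C" by (rule verts_comp_edges_subset)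
  obtain g where g: "g \<in> comp_edges ends F C" using ne by blast
  then have "g \<in> E" using FE comp_edges_subset[of ends F C] by blast
  then obtain w where w: "w \<in> ends g" using ends_nonempty by blast
  have wC: "w \<in> C" using w g unfolding comp_edges_def by blast
  have wV: "w \<in> verts ends (comp_edges ends F C)" using w g by (auto simp: mem_verts_iff)
  show "C \<subseteq> verts ends (comp_edges ends F C)"
    using comp_vert_in_comp_edges[OF FE C _ wC] wV by blast
qed

lemma verts_comp_edges:
  assumes C: "C \<in> comps ends VE E"
  shows "verts ends (comp_edges ends E C) = C"
proof (rule verts_comp_edges_nonempty[OF order_refl C])
  obtain x where "x \<in> C" using C unfolding comps_def by (blast intro: comp_of_self)
  moreover have "x \<in> VE" using calculation comps_subset[OF C] by blast
  then obtain g where "g \<in> E" "x \<in> ends g" by (auto simp: mem_verts_iff)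
  ultimately show "comp_edges ends E C \<noteq> {}" using comp_edgesI[OF order_refl _ _ _ C] by blast
qed

lemma card_comp_no_edges:
  assumes FE: "F \<subseteq> E" and C: "C \<in> comps ends VE F" and e: "comp_edges ends F C = {}"
  shows "card C = 1"
proof -
  obtain x where x: "x \<in> VE" "C = comp_of ends VE F x" using C unfolding comps_def by blast
  then have xC: "x \<in> C" by (simp add: comp_of_self)
  have "y = x" if "y \<in> C" for y
    using comp_vert_in_comp_edges[OF FE C xC that] e by auto
  then have "C = {x}" using xC by blast
  then show ?thesis by simp
qed

lemma Delta_comp_ge:
  assumes FE: "F \<subseteq> E" and C: "C \<in> comps ends VE F"
  shows "-1 \<le> Delta_comp ends F C"
proof (cases "comp_edges ends F C = {}")
  case True
  then show ?thesis using card_comp_no_edges[OF FE C True] unfolding Delta_comp_def by simp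
next
  case False
  then obtain g where g: "g \<in> comp_edges ends F C" by blast
  have ECE: "comp_edges ends F C \<subseteq> E" using FE comp_edges_subset[of ends F C] by blast
  have "delta ends {g} \<le> delta ends (comp_edges ends F C)"
    using delta_le_connected[OF connected_comp_edges[OF FE C] ECE] g by blast
  moreover have "-1 \<le> delta ends {g}" using delta_singleton_ge g ECE by blast
  ultimately show ?thesis
    using Delta_comp_eq_delta[OF verts_comp_edges_nonempty[OF FE C False]] by linarith
qed

lemma delta_le_Delta_comp:
  assumes FE: "F \<subseteq> E" and C: "C \<in> comps ends VE F"
    and X: "X \<subseteq> comp_edges ends F C" and nonneg: "0 \<le> Delta_comp ends F C"
  shows "delta ends X \<le> Delta_comp ends F C"
proof (cases "X = {}")
  case False
  then have ne: "comp_edges ends F C \<noteq> {}" using X by blast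
  have "delta ends X \<le> delta ends (comp_edges ends F C)"
    using delta_le_connected[OF connected_comp_edges[OF FE C] _ X False]
      comp_edges_subset[of ends F C] FE by blast
  then show ?thesis using Delta_comp_eq_delta[OF verts_comp_edges_nonempty[OF FE C ne]] by simp
qed (use nonneg in simp)

section \<open>The kernel is the largest leafless subgraph\<close>

text \<open>Invariant of leaf deletion started at \<open>(C, EC)\<close>; the counting clause says that
  \<open>delta\<close> is preserved, and \<open>L\<close> is a leafless set that is never touched.\<close>
definition kernel_inv :: "'v set \<Rightarrow> 'e set \<Rightarrow> 'e set \<Rightarrow> 'v set \<times> 'e set \<Rightarrow> bool" where
  "kernel_inv C EC L H \<longleftrightarrow> snd H \<subseteq> EC \<and> L \<subseteq> snd H \<and> verts ends (snd H) \<subseteq> fst H \<and>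
     fst H \<subseteq> C \<and> card C + card (snd H) = card EC + card (fst H)"

lemma kernel_inv_leaf_step:
  assumes C: "finite C" and EC: "EC \<subseteq> E" and L: "leafless ends L"
    and inv: "kernel_inv C EC L H" and step: "leaf_step ends H H'"
  shows "kernel_inv C EC L H' \<and> card (snd H') < card (snd H)"
proof -
  obtain v e where leaf: "is_leaf ends (fst H) (snd H) v e"
    and H': "H' = (fst H - {v}, snd H - {e})"
    using step unfolding leaf_step_def by blast
  have v: "v \<in> fst H" and e: "e \<in> snd H" and ve: "v \<in> ends e"
    and only: "\<forall>g\<in>snd H. v \<in> ends g \<longrightarrow> g = e"
    using is_leafD[OF leaf] by auto
  have i: "snd H \<subseteq> EC" "L \<subseteq> snd H" "verts ends (snd H) \<subseteq> fst H" "fst H \<subseteq> C"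
    "card C + card (snd H) = card EC + card (fst H)"
    using inv unfolding kernel_inv_def by auto
  have "e \<notin> L"
  proof
    assume "e \<in> L"
    with leaf i(2) have "is_leaf ends (verts ends L) L v e" by (rule is_leaf_subset)
    then show False using L by (simp add: leafless_def)
  qed
  then have L': "L \<subseteq> snd H - {e}" using i(2) by blast
  have V': "verts ends (snd H - {e}) \<subseteq> fst H - {v}"
  proof
    fix x assume x: "x \<in> verts ends (snd H - {e})"
    then have "x \<in> fst H" using i(3) verts_mono[of "snd H - {e}" "snd H" ends] by blast
    moreover have "x \<noteq> v" using x only by (auto simp: mem_verts_iff)
    ultimately show "x \<in> fst H - {v}" by blast
  qed
  have "Suc (card (fst H - {v})) = card (fst H)"
    using card_Suc_Diff1[OF finite_subset[OF i(4) C] v] .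
  moreover have "Suc (card (snd H - {e})) = card (snd H)"
    using card_Suc_Diff1[OF finite_edges e] i(1) EC by (meson order_trans)
  ultimately have "card C + card (snd H - {e}) = card EC + card (fst H - {v})"
    using i(5) by linarith
  then have "kernel_inv C EC L H'"
    unfolding kernel_inv_def H' using i L' V' by auto
  moreover have "card (snd H') < card (snd H)" using \<open>Suc (card (snd H - {e})) = _\<close> H' by simp
  ultimately show ?thesis ..
qed

lemma kernel_inv_rtranclp:
  assumes "finite C" "EC \<subseteq> E" "leafless ends L"
    and "(leaf_step ends)\<^sup>*\<^sup>* H H'" "kernel_inv C EC L H"
  shows "kernel_inv C EC L H'"
  using assms(4,5)
proof (induction rule: rtranclp_induct)
  case (step H1 H2)
  then show ?case using kernel_inv_leaf_step[OF assms(1-3)] by blast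
qed

lemma leaf_steps_reach_no_leaves:
  assumes "finite C" "EC \<subseteq> E" "leafless ends L" "kernel_inv C EC L H"
  obtains H' where "(leaf_step ends)\<^sup>*\<^sup>* H H'" "no_leaves ends H'"
  using assms(4)
proof (induction "card (snd H)" arbitrary: H rule: less_induct)
  case less
  show ?case
  proof (cases "no_leaves ends H")
    case True
    then show ?thesis using less.prems(1) by blast
  next
    case False
    then obtain v e where "is_leaf ends (fst H) (snd H) v e" unfolding no_leaves_def by blast
    then have step: "leaf_step ends H (fst H - {v}, snd H - {e})" unfolding leaf_step_def by blast
    note after = kernel_inv_leaf_step[OF assms(1-3) less.prems(2) step]
    show ?thesis
    proof (rule less.hyps[OF _ _ conjunct1[OF after]])
      show "card (snd (fst H - {v}, snd H - {e})) < card (snd H)" using after by blast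
      fix H' assume "(leaf_step ends)\<^sup>*\<^sup>* (fst H - {v}, snd H - {e}) H'" "no_leaves ends H'"
      then show thesis using less.prems(1) step by (meson converse_rtranclp_into_rtranclp)
    qed
  qed
qed

text \<open>The end state has no isolated vertices because \<open>delta\<close> is preserved and, by connectivity,
  \<open>card C - card (verts ends L) \<le> card EC - card L\<close>.\<close>
lemma kernel_inv_no_leaves:
  assumes C: "C \<in> comps ends VE E" and EC: "EC = comp_edges ends E C"
    and L: "L = max_leafless ends EC" and D1: "1 \<le> Delta_comp ends E C"
    and inv: "kernel_inv C EC L H" and nl: "no_leaves ends H"
  shows "H = (verts ends L, L)"
proof -
  have i: "snd H \<subseteq> EC" "L \<subseteq> snd H" "verts ends (snd H) \<subseteq> fst H" "fst H \<subseteq> C"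
    "card C + card (snd H) = card EC + card (fst H)"
    using inv unfolding kernel_inv_def by auto
  have ECE: "EC \<subseteq> E" using EC comp_edges_subset[of ends E C] by simp
  have "leafless ends (snd H)"
    unfolding leafless_def
  proof (intro allI notI)
    fix u g assume "is_leaf ends (verts ends (snd H)) (snd H) u g"
    then have "is_leaf ends (fst H) (snd H) u g" using i(3) unfolding is_leaf_def by blast
    then show False using nl unfolding no_leaves_def by blast
  qed
  then have "snd H \<subseteq> L" using subset_max_leafless[OF i(1)] L by simp
  then have sH: "snd H = L" using i(2) by blast
  have count: "card C + card L = card EC + card (fst H)" using i(5) sH by simp
  have "int (card EC) - int (card C) \<ge> 1" using D1 EC unfolding Delta_comp_def by simp
  then have "L \<noteq> {}" using count by auto
  have "card (verts ends EC - verts ends L) \<le> card (EC - L)"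
    using card_verts_Diff_le[OF _ ECE _ \<open>L \<noteq> {}\<close>] connected_comp_edges[OF order_refl C] EC i(1) sH
    by simp
  moreover have "verts ends EC = C" using verts_comp_edges[OF C] EC by simp
  ultimately have "card (fst H) \<le> card (verts ends L)"
    using card_split_subset[OF _ ECE, of L] i(1) sH count by simp
  moreover have "verts ends L \<subseteq> fst H" using i(3) sH by simp
  moreover have "finite (fst H)"
    using finite_subset[OF i(4)] comps_subset[OF C] finite_verts[of E] by (meson finite_subset order_refl)
  ultimately have "fst H = verts ends L" by (metis card_seteq)
  then show ?thesis using sH by (metis prod.collapse)
qed

lemma kernel_eq_max_leafless:
  assumes C: "C \<in> comps ends VE E" and D1: "1 \<le> Delta_comp ends E C"
  shows "kernel ends E C = (verts ends (max_leafless ends (comp_edges ends E C)),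
                            max_leafless ends (comp_edges ends E C))"
    and "card C + card (max_leafless ends (comp_edges ends E C))
           = card (comp_edges ends E C) + card (verts ends (max_leafless ends (comp_edges ends E C)))"
proof -
  define EC where "EC = comp_edges ends E C"
  define L where "L = max_leafless ends EC"
  have finC: "finite C" using comps_subset[OF C] finite_verts[of E] finite_subset by blast
  have ECE: "EC \<subseteq> E" using EC_def comp_edges_subset[of ends E C] by simp
  have Ll: "leafless ends L" unfolding L_def by (rule leafless_max_leafless)
  have inv0: "kernel_inv C EC L (C, EC)"
    unfolding kernel_inv_def using max_leafless_subset[of ends EC] verts_comp_edges_subset[of ends E C]
    by (simp add: L_def EC_def)
  have final: "H = (verts ends L, L)" if "(leaf_step ends)\<^sup>*\<^sup>* (C, EC) H" "no_leaves ends H" for H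
    using kernel_inv_no_leaves[OF C EC_def L_def D1 kernel_inv_rtranclp[OF finC ECE Ll that(1) inv0] that(2)] .
  obtain H where H: "(leaf_step ends)\<^sup>*\<^sup>* (C, EC) H" "no_leaves ends H"
    by (rule leaf_steps_reach_no_leaves[OF finC ECE Ll inv0])
  have "kernel ends E C = (verts ends L, L)"
    unfolding kernel_def EC_def[symmetric]
  proof (rule the_equality)
    show "(leaf_step ends)\<^sup>*\<^sup>* (C, EC) (verts ends L, L) \<and> no_leaves ends (verts ends L, L)"
      using H final[OF H] by simp
  qed (use final in blast)
  then show "kernel ends E C = (verts ends (max_leafless ends (comp_edges ends E C)),
                            max_leafless ends (comp_edges ends E C))"
    by (simp add: L_def EC_def)
  have "kernel_inv C EC L (verts ends L, L)"
    using kernel_inv_rtranclp[OF finC ECE Ll H(1) inv0] final[OF H] by simp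
  then show "card C + card (max_leafless ends (comp_edges ends E C))
           = card (comp_edges ends E C) + card (verts ends (max_leafless ends (comp_edges ends E C)))"
    unfolding kernel_inv_def by (simp add: L_def EC_def)
qed

lemma delta_max_leafless:
  assumes C: "C \<in> comps ends VE E" and D1: "1 \<le> Delta_comp ends E C"
  shows "delta ends (max_leafless ends (comp_edges ends E C)) = Delta_comp ends E C"
    and "max_leafless ends (comp_edges ends E C) \<noteq> {}"
proof -
  note count = kernel_eq_max_leafless(2)[OF C D1]
  then show "delta ends (max_leafless ends (comp_edges ends E C)) = Delta_comp ends E C"
    unfolding delta_def Delta_comp_def by linarith
  show "max_leafless ends (comp_edges ends E C) \<noteq> {}"
    using count D1 unfolding Delta_comp_def by auto
qed

lemma mem_core_edges_iff:
  "e \<in> core_edges E ends \<longleftrightarrow>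
     (\<exists>C\<in>comps ends VE E. 1 \<le> Delta_comp ends E C \<and> e \<in> max_leafless ends (comp_edges ends E C))"
proof -
  have "snd (kernel ends E C) = max_leafless ends (comp_edges ends E C)"
    if "C \<in> comps ends VE E" "1 \<le> Delta_comp ends E C" for C
    using kernel_eq_max_leafless(1)[OF that] by simp
  then show ?thesis unfolding core_edges_def by blast
qed

section \<open>Circuits lie in the core, and every core edge lies in a circuit\<close>

lemma comp_of_edge:
  assumes "f \<in> E" "w \<in> ends f"
  shows "comp_of ends VE E w \<in> comps ends VE E" "f \<in> comp_edges ends E (comp_of ends VE E w)"
proof -
  have w: "w \<in> VE" using assms by (auto simp: mem_verts_iff)
  then show C: "comp_of ends VE E w \<in> comps ends VE E" by (rule comp_of_in_comps)
  show "f \<in> comp_edges ends E (comp_of ends VE E w)"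
    using comp_edgesI[OF order_refl assms comp_of_self[OF w] C] .
qed

lemma leafless_if_critical:
  assumes WE: "W \<subseteq> E" and W: "delta_critical ends W"
  shows "leafless ends W"
  unfolding leafless_def
proof (intro allI notI)
  fix u g assume leaf: "is_leaf ends (verts ends W) W u g"
  have g: "g \<in> W" and u: "u \<in> verts ends W" and only: "\<forall>h\<in>W. u \<in> ends h \<longrightarrow> h = g"
    using is_leafD[OF leaf] by auto
  have "verts ends (W - {g}) \<subseteq> verts ends W - {u}"
  proof
    fix x assume "x \<in> verts ends (W - {g})"
    then obtain h where "h \<in> W" "h \<noteq> g" "x \<in> ends h" by (auto simp: mem_verts_iff)
    then show "x \<in> verts ends W - {u}" using only by (auto simp: mem_verts_iff)
  qed
  then have "card (verts ends (W - {g})) \<le> card (verts ends W - {u})"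
    using finite_verts[OF WE] by (intro card_mono) auto
  moreover have "Suc (card (verts ends W - {u})) = card (verts ends W)"
    using card_Suc_Diff1[OF finite_verts[OF WE] u] .
  moreover have "Suc (card (W - {g})) = card W" using card_Suc_Diff1[OF finite_edges[OF WE] g] .
  ultimately have "delta ends W \<le> delta ends (W - {g})" unfolding delta_def by linarith
  moreover have "W - {g} \<subset> W" using g by blast
  then have "delta ends (W - {g}) < delta ends W" by (rule delta_criticalD[OF W])
  ultimately show False by linarith
qed

lemma verts_disjoint_comp_edges:
  assumes A: "A \<in> comps ends VE E" and X: "X \<subseteq> E"
  shows "verts ends (X \<inter> comp_edges ends E A) \<inter> verts ends (X - comp_edges ends E A) = {}"
proof (rule equals0I)
  fix x assume "x \<in> verts ends (X \<inter> comp_edges ends E A) \<inter> verts ends (X - comp_edges ends E A)"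
  then obtain g h where g: "g \<in> comp_edges ends E A" "x \<in> ends g"
    and h: "h \<in> X" "h \<notin> comp_edges ends E A" "x \<in> ends h"
    by (auto simp: mem_verts_iff)
  have "x \<in> A" using g unfolding comp_edges_def by blast
  then have "h \<in> comp_edges ends E A" using comp_edgesI[OF order_refl _ h(3) _ A] h(1) X by blast
  then show False using h(2) by blast
qed

lemma leafless_Int_comp_edges:
  assumes A: "A \<in> comps ends VE E" and X: "X \<subseteq> E" "leafless ends X"
  shows "leafless ends (X \<inter> comp_edges ends E A)"
  unfolding leafless_def
proof (intro allI notI)
  fix u g assume leaf: "is_leaf ends (verts ends (X \<inter> comp_edges ends E A)) (X \<inter> comp_edges ends E A) u g"
  have g: "g \<in> X" "g \<in> comp_edges ends E A" and ug: "u \<in> ends g" and c2: "card (ends g) = 2"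
    and only: "\<forall>h\<in>X \<inter> comp_edges ends E A. u \<in> ends h \<longrightarrow> h = g"
    using is_leafD[OF leaf] by auto
  have uA: "u \<in> A" using g(2) ug unfolding comp_edges_def by blast
  have "h = g" if h: "h \<in> X" "u \<in> ends h" for h
  proof -
    have "h \<in> comp_edges ends E A" using comp_edgesI[OF order_refl _ h(2) uA A] h(1) X(1) by blast
    then show ?thesis using only h by blast
  qed
  then have "\<forall>h\<in>X. u \<in> ends h \<longrightarrow> h = g" by blast
  with g(1) ug c2 have "is_leaf ends (verts ends X) X u g" by (rule is_leaf_in_verts)
  then show False using X(2) by (simp add: leafless_def)
qed

text \<open>The part of a circuit in the component \<open>A\<close> of one of its edges is leafless and, by
  criticality, carries all of the circuit's positive \<open>delta\<close>; so \<open>A\<close> has \<open>Delta \<ge> 1\<close>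
  and that part lies in the kernel of \<open>A\<close>.\<close>
lemma circuit_subset_core_edges:
  assumes k: "k \<ge> 1" and C0: "C0 \<in> Mk_circuits E ends k" and f: "f \<in> C0"
  shows "f \<in> core_edges E ends"
proof -
  have C0E: "C0 \<subseteq> E" and dC0: "delta ends C0 = int k" and crit: "delta_critical ends C0"
    using Mk_circuits_iff[OF k] C0 by auto
  have fE: "f \<in> E" using f C0E by blast
  obtain w where "w \<in> ends f" using ends_nonempty[OF fE] by blast
  define A where "A = comp_of ends VE E w"
  have A: "A \<in> comps ends VE E" "f \<in> comp_edges ends E A"
    using comp_of_edge[OF fE \<open>w \<in> ends f\<close>] by (simp_all add: A_def)
  define EA where "EA = comp_edges ends E A"
  have EAE: "EA \<subseteq> E" using comp_edges_subset[of ends E A] by (simp add: EA_def)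
  have inner: "C0 \<inter> EA \<subseteq> E" and outer: "C0 - EA \<subseteq> E" using C0E by auto
  have split: "delta ends C0 = delta ends (C0 \<inter> EA) + delta ends (C0 - EA)"
    using delta_Un_disjoint[OF inner outer verts_disjoint_comp_edges[OF A(1) C0E, folded EA_def]]
    by (simp add: Int_Diff_Un)
  have fin: "f \<in> C0 \<inter> EA" using f A(2) by (simp add: EA_def)
  then have "C0 - EA \<subset> C0" by blast
  then have "delta ends (C0 - EA) < delta ends C0" by (rule delta_criticalD[OF crit])
  then have "1 \<le> delta ends (C0 \<inter> EA)" using split by linarith
  also have "\<dots> \<le> delta ends EA"
  proof (rule delta_le_connected)
    show "connected_edges ends EA" using connected_comp_edges[OF order_refl A(1)] by (simp add: EA_def)
  qed (use EAE fin in auto)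
  finally have "1 \<le> Delta_comp ends E A"
    using Delta_comp_eq_delta[OF verts_comp_edges[OF A(1)]] by (simp add: EA_def)
  moreover have "C0 \<inter> EA \<subseteq> max_leafless ends EA"
    using leafless_Int_comp_edges[OF A(1) C0E leafless_if_critical[OF C0E crit]]
    by (intro subset_max_leafless) (auto simp: EA_def)
  ultimately show ?thesis using mem_core_edges_iff A(1) fin by (auto simp: EA_def)
qed

lemma obtain_critical_over_max_leafless:
  assumes A: "A \<in> comps ends VE E" and D1: "1 \<le> Delta_comp ends E A"
  obtains N where "N \<subseteq> comp_edges ends E A" "delta_critical ends N"
    "delta ends N = Delta_comp ends E A" "max_leafless ends (comp_edges ends E A) \<subseteq> N"
proof -
  define EA where "EA = comp_edges ends E A"
  have EAE: "EA \<subseteq> E" using comp_edges_subset[of ends E A] by (simp add: EA_def)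
  have cEA: "connected_edges ends EA" using connected_comp_edges[OF order_refl A] by (simp add: EA_def)
  have dEA: "delta ends EA = Delta_comp ends E A"
    using Delta_comp_eq_delta[OF verts_comp_edges[OF A]] by (simp add: EA_def)
  obtain N where NEA: "N \<subseteq> EA" and dN: "delta ends EA \<le> delta ends N"
    and eq: "N \<noteq> {} \<Longrightarrow> delta ends N = delta ends EA"
    and min: "\<And>D. {} \<subseteq> D \<Longrightarrow> D \<subset> N \<Longrightarrow> delta ends D < delta ends EA"
    by (rule obtain_minimal_dense[OF empty_subsetI EAE order_refl]) blast
  have "N \<noteq> {}" using dN dEA D1 by auto
  then have dN': "delta ends N = delta ends EA" by (rule eq)
  have "delta_critical ends N" unfolding delta_critical_def using min dN' by simp
  moreover have "max_leafless ends EA \<subseteq> N"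
  proof (rule subset_if_leaves_in_dense[OF cEA EAE NEA \<open>N \<noteq> {}\<close>])
    show "delta ends EA \<le> delta ends N" using dN' by simp
    show "max_leafless ends EA \<subseteq> EA" by (rule max_leafless_subset)
    show "\<And>u g. is_leaf ends (verts ends (max_leafless ends EA)) (max_leafless ends EA) u g
        \<Longrightarrow> u \<in> verts ends N"
      using leafless_max_leafless[of ends EA] by (simp add: leafless_def)
  qed
  ultimately show thesis using that NEA dN' dEA by (simp add: EA_def)
qed

text \<open>A critical \<open>N\<close> containing the kernel edge \<open>e\<close> is shrunk to \<open>delta = k\<close> if it is too
  dense, and otherwise extended by the given circuit \<open>C0\<close> up to \<open>delta = k\<close>.\<close>
lemma core_edge_in_circuit:
  assumes k: "k \<ge> 1" and C0: "C0 \<in> Mk_circuits E ends k" and e: "e \<in> core_edges E ends"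
  obtains C where "C \<in> Mk_circuits E ends k" "e \<in> C"
proof -
  have C0E: "C0 \<subseteq> E" and dC0: "delta ends C0 = int k"
    using Mk_circuits_iff[OF k] C0 by auto
  obtain A where A: "A \<in> comps ends VE E" "1 \<le> Delta_comp ends E A"
    and eL: "e \<in> max_leafless ends (comp_edges ends E A)"
    using e mem_core_edges_iff by blast
  obtain N where NA: "N \<subseteq> comp_edges ends E A" and crit: "delta_critical ends N"
    and LN: "max_leafless ends (comp_edges ends E A) \<subseteq> N"
    by (rule obtain_critical_over_max_leafless[OF A]) blast
  have NE: "N \<subseteq> E" using NA comp_edges_subset[of ends E A] by blast
  have eN: "e \<in> N" using eL LN by blast
  show thesis
  proof (cases "int k \<le> delta ends N")
    case True
    obtain W where W: "W \<subseteq> N" "delta_critical ends W" "e \<in> W" "delta ends W = int k"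
      by (rule critical_shrink_to_delta[OF NE crit eN k True])
    have "W \<subseteq> E" using W(1) NE by blast
    then have "W \<in> Mk_circuits E ends k" using Mk_circuits_iff[OF k] W by simp
    then show thesis using W(3) by (rule that)
  next
    case False
    have K: "N \<union> C0 \<subseteq> E" using NE C0E by blast
    have "int k \<le> delta ends (N \<union> C0)" using delta_le_Un_critical[OF NE C0E crit] dC0 by simp
    moreover have "delta ends N \<le> int k" using False by simp
    ultimately obtain X where X: "N \<subseteq> X" "X \<subseteq> N \<union> C0" "delta_critical ends X" "delta ends X = int k"
      using critical_extend_to_delta[OF Un_upper1 K crit] by blast
    have "X \<subseteq> E" using X(2) K by blast
    then have "X \<in> Mk_circuits E ends k" using Mk_circuits_iff[OF k] X by simp
    then show thesis using X(1) eN by (blast intro: that)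
  qed
qed

lemma coloops_eq_Diff_core_edges:
  assumes k: "k \<ge> 1" and nt: "Mk_circuits E ends k \<noteq> {}"
  shows "coloops E (Mk_circuits E ends k) = E - core_edges E ends"
proof -
  obtain C0 where C0: "C0 \<in> Mk_circuits E ends k" using nt by blast
  have "e \<in> core_edges E ends \<longleftrightarrow> (\<exists>C\<in>Mk_circuits E ends k. e \<in> C)" for e
  proof
    assume "e \<in> core_edges E ends"
    then obtain C where "C \<in> Mk_circuits E ends k" "e \<in> C" by (rule core_edge_in_circuit[OF k C0])
    then show "\<exists>C\<in>Mk_circuits E ends k. e \<in> C" by blast
  qed (use circuit_subset_core_edges[OF k] in blast)
  then show ?thesis unfolding coloops_def by blast
qed

lemma obtain_ends_pair:
  assumes "f \<in> E"
  obtains w1 w2 where "ends f = {w1, w2}"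
proof (cases "card (ends f) = 1")
  case True
  then obtain x where "ends f = {x}" using card_1_singletonE by blast
  then show thesis using that[of x x] by simp
next
  case False
  then have "card (ends f) = 2" using card_ends[OF assms] by linarith
  then obtain x y where "ends f = {x, y}" by (meson card_2_iff)
  then show thesis by (rule that)
qed

end

section \<open>Deleting an edge\<close>

locale edge_deletion = multigraph_on E ends
  for E :: "'e set" and ends :: "'e \<Rightarrow> 'v set" +
  fixes e :: 'e and w1 w2 :: 'v
  assumes e_in_E: "e \<in> E" and ends_e: "ends e = {w1, w2}"
begin

abbreviation Fe :: "'e set" where "Fe \<equiv> E - {e}"
abbreviation Ae :: "'v set" where "Ae \<equiv> comp_of ends VE E w1"
abbreviation A1 :: "'v set" where "A1 \<equiv> comp_of ends VE Fe w1"
abbreviation A2 :: "'v set" where "A2 \<equiv> comp_of ends VE Fe w2"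
abbreviation EAe :: "'e set" where "EAe \<equiv> comp_edges ends E Ae"
abbreviation Le :: "'e set" where "Le \<equiv> max_leafless ends EAe"

lemma Fe_subset: "Fe \<subseteq> E" by blast

lemma w_in_VE: "w1 \<in> VE" "w2 \<in> VE"
  using e_in_E ends_e by (auto simp: mem_verts_iff)

lemma Ae_in_comps: "Ae \<in> comps ends VE E"
  by (rule comp_of_in_comps[OF w_in_VE(1)])

lemma w_in_A: "w1 \<in> A1" "w2 \<in> A2" "w1 \<in> Ae"
  using comp_of_self[OF w_in_VE(1), of ends Fe] comp_of_self[OF w_in_VE(2), of ends Fe]
    comp_of_self[OF w_in_VE(1), of ends E] by simp_all

lemma ends_e_subset_Ae: "ends e \<subseteq> Ae"
proof (rule ends_subset_comp[OF order_refl e_in_E _ w_in_A(3) Ae_in_comps])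
  show "w1 \<in> ends e" using ends_e by simp
qed

lemma e_in_EAe: "e \<in> EAe"
  using ends_e_subset_Ae e_in_E unfolding comp_edges_def by blast

lemma A_in_comps: "A1 \<in> comps ends VE Fe" "A2 \<in> comps ends VE Fe"
  by (rule comp_of_in_comps[OF w_in_VE(1)], rule comp_of_in_comps[OF w_in_VE(2)])

lemma comp_of_Fe_subset: "comp_of ends VE Fe w \<subseteq> comp_of ends VE E w"
proof -
  have "(adj ends Fe)\<^sup>* \<subseteq> (adj ends E)\<^sup>*" by (rule rtrancl_mono[OF adj_mono[OF Fe_subset]])
  then show ?thesis unfolding comp_of_def by blast
qed

lemma A_subset_Ae: "A1 \<subseteq> Ae" "A2 \<subseteq> Ae"
proof -
  have "w2 \<in> Ae" using ends_e_subset_Ae ends_e by blast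
  then have "comp_of ends VE E w2 = Ae" by (rule comp_of_eq)
  then show "A1 \<subseteq> Ae" "A2 \<subseteq> Ae" using comp_of_Fe_subset[of w1] comp_of_Fe_subset[of w2] by simp_all
qed

lemma Ae_subset_A: "Ae \<subseteq> A1 \<union> A2"
proof
  fix x assume "x \<in> Ae"
  then have "(w1, x) \<in> (adj ends E)\<^sup>*" by (simp add: mem_comp_of_iff)
  then show "x \<in> A1 \<union> A2"
  proof (induction rule: rtrancl_induct)
    case base
    show ?case using w_in_A(1) by blast
  next
    case (step y z)
    obtain g where g: "g \<in> E" "y \<in> ends g" "z \<in> ends g" using adjD[OF step(2)] by blast
    have zV: "z \<in> VE" using g by (auto simp: mem_verts_iff)
    show ?case
    proof (cases "g = e")
      case True
      then have "z = w1 \<or> z = w2" using g(3) ends_e by simp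
      then show ?thesis using w_in_A(1,2) by blast
    next
      case False
      then have "g \<in> Fe" using g(1) by simp
      then have yz: "(y, z) \<in> adj ends Fe" using g(2,3) by (rule adjI)
      have "\<exists>w\<in>{w1, w2}. y \<in> comp_of ends VE Fe w" using step(3) by blast
      then obtain w where w: "w \<in> {w1, w2}" "(w, y) \<in> (adj ends Fe)\<^sup>*"
        by (auto simp: mem_comp_of_iff)
      from w(2) yz have "(w, z) \<in> (adj ends Fe)\<^sup>*" by (rule rtrancl_into_rtrancl)
      then have "z \<in> comp_of ends VE Fe w" using zV by (simp add: mem_comp_of_iff)
      then show ?thesis using w(1) by blast
    qed
  qed
qed

lemma Ae_eq: "Ae = A1 \<union> A2"
  using Ae_subset_A A_subset_Ae by blast

lemma comp_of_Fe_outside: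
  assumes x: "x \<in> VE" "x \<notin> Ae"
  shows "comp_of ends VE Fe x = comp_of ends VE E x"
proof
  show "comp_of ends VE Fe x \<subseteq> comp_of ends VE E x" by (rule comp_of_Fe_subset)
  have E_Fe: "(adj ends Fe)\<^sup>* \<subseteq> (adj ends E)\<^sup>*" by (rule rtrancl_mono[OF adj_mono[OF Fe_subset]])
  show "comp_of ends VE E x \<subseteq> comp_of ends VE Fe x"
  proof
    fix y assume "y \<in> comp_of ends VE E x"
    then have yV: "y \<in> VE" and xy: "(x, y) \<in> (adj ends E)\<^sup>*" by (simp_all add: mem_comp_of_iff)
    from xy have "(x, y) \<in> (adj ends Fe)\<^sup>*"
    proof (induction rule: rtrancl_induct)
      case (step y z)
      obtain g where g: "g \<in> E" "y \<in> ends g" "z \<in> ends g" using adjD[OF step(2)] by blast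
      have "g \<noteq> e"
      proof
        assume "g = e"
        then have "y \<in> Ae" using g(2) ends_e_subset_Ae by blast
        then have "comp_of ends VE E y = Ae" by (rule comp_of_eq)
        moreover have "y \<in> VE" using g(1,2) by (auto simp: mem_verts_iff)
        then have "y \<in> comp_of ends VE E x" using step(3) E_Fe by (auto simp: mem_comp_of_iff)
        then have "comp_of ends VE E y = comp_of ends VE E x" by (rule comp_of_eq)
        ultimately have "x \<in> Ae" using comp_of_self[OF x(1), of ends E] by simp
        then show False using x(2) by blast
      qed
      then have "g \<in> Fe" using g(1) by simp
      then have "(y, z) \<in> adj ends Fe" using g(2,3) by (rule adjI)
      with step(3) show ?case by (rule rtrancl_into_rtrancl)
    qed simp
    then show "y \<in> comp_of ends VE Fe x" using yV by (simp add: mem_comp_of_iff)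
  qed
qed

lemma comps_Fe: "comps ends VE Fe = (comps ends VE E - {Ae}) \<union> {A1, A2}"
proof
  show "comps ends VE Fe \<subseteq> (comps ends VE E - {Ae}) \<union> {A1, A2}"
  proof
    fix C assume "C \<in> comps ends VE Fe"
    then obtain x where x: "x \<in> VE" "C = comp_of ends VE Fe x" unfolding comps_def by blast
    show "C \<in> (comps ends VE E - {Ae}) \<union> {A1, A2}"
    proof (cases "x \<in> Ae")
      case True
      then have "x \<in> A1 \<or> x \<in> A2" using Ae_subset_A by blast
      then have "C = A1 \<or> C = A2" using comp_of_eq x(2) by metis
      then show ?thesis by blast
    next
      case False
      have "comp_of ends VE E x \<noteq> Ae" using False comp_of_self[OF x(1), of ends E] by blast
      then show ?thesis
        using comp_of_Fe_outside[OF x(1) False] x(2) comp_of_in_comps[OF x(1), of ends E] by simp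
    qed
  qed
  show "(comps ends VE E - {Ae}) \<union> {A1, A2} \<subseteq> comps ends VE Fe"
  proof
    fix C assume C: "C \<in> (comps ends VE E - {Ae}) \<union> {A1, A2}"
    show "C \<in> comps ends VE Fe"
    proof (cases "C \<in> {A1, A2}")
      case True
      then show ?thesis using A_in_comps by blast
    next
      case False
      then have CE: "C \<in> comps ends VE E" "C \<noteq> Ae" using C by blast+
      then obtain x where x: "x \<in> VE" "C = comp_of ends VE E x" unfolding comps_def by blast
      have "x \<notin> Ae"
      proof
        assume "x \<in> Ae"
        then have "C = Ae" using comps_disjoint[OF CE(1) Ae_in_comps] comp_of_self[OF x(1), of ends E] x(2) by blast
        then show False using CE(2) by blast
      qed
      then show ?thesis using comp_of_Fe_outside[OF x(1)] x comp_of_in_comps[OF x(1), of ends Fe] by simp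
    qed
  qed
qed

lemma A_notin_comps_E: "A1 \<notin> comps ends VE E - {Ae}" "A2 \<notin> comps ends VE E - {Ae}"
proof -
  have "comp_of ends VE Fe w \<notin> comps ends VE E - {Ae}" if w: "w \<in> {w1, w2}" for w
  proof
    assume c: "comp_of ends VE Fe w \<in> comps ends VE E - {Ae}"
    have "w \<in> comp_of ends VE Fe w" using w w_in_A(1,2) by blast
    moreover have "w \<in> Ae" using w ends_e_subset_Ae ends_e by blast
    ultimately have "comp_of ends VE Fe w = Ae" using comps_disjoint[OF _ Ae_in_comps] c by blast
    then show False using c by blast
  qed
  then show "A1 \<notin> comps ends VE E - {Ae}" "A2 \<notin> comps ends VE E - {Ae}" by blast+
qed

lemma comp_edges_Fe_outside:
  assumes B: "B \<in> comps ends VE E" "B \<noteq> Ae"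
  shows "comp_edges ends Fe B = comp_edges ends E B"
proof -
  have "e \<notin> comp_edges ends E B"
  proof
    assume "e \<in> comp_edges ends E B"
    then have "w1 \<in> B" using ends_e unfolding comp_edges_def by blast
    then have "B = Ae" using comps_disjoint[OF B(1) Ae_in_comps] w_in_A(3) by blast
    then show False using B(2) by blast
  qed
  then show ?thesis unfolding comp_edges_def by blast
qed

lemma comp_edges_A: "comp_edges ends Fe A1 \<union> comp_edges ends Fe A2 = EAe - {e}"
proof
  show "comp_edges ends Fe A1 \<union> comp_edges ends Fe A2 \<subseteq> EAe - {e}"
    using A_subset_Ae unfolding comp_edges_def by blast
  show "EAe - {e} \<subseteq> comp_edges ends Fe A1 \<union> comp_edges ends Fe A2"
  proof
    fix g assume g: "g \<in> EAe - {e}"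
    then have gF: "g \<in> Fe" and gA: "ends g \<subseteq> Ae" unfolding comp_edges_def by blast+
    obtain v where v: "v \<in> ends g" using ends_nonempty gF by blast
    then have "v \<in> A1 \<or> v \<in> A2" using gA Ae_subset_A by blast
    then show "g \<in> comp_edges ends Fe A1 \<union> comp_edges ends Fe A2"
      using comp_edgesI[OF Fe_subset gF v] A_in_comps by blast
  qed
qed

lemma A_disjoint: "A1 \<noteq> A2 \<Longrightarrow> A1 \<inter> A2 = {}"
  using comps_disjoint[OF A_in_comps(1,2)] by blast

lemma finite_Ae: "finite Ae"
  by (rule finite_subset[OF comps_subset[OF Ae_in_comps] finite_verts[OF order_refl]])

lemma card_EAe: "card EAe = Suc (card (EAe - {e}))"
  using card_Suc_Diff1[OF _ e_in_EAe] finite_edges comp_edges_subset[of ends E Ae] by simp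

lemma Delta_A_ge: "-1 \<le> Delta_comp ends Fe A1" "-1 \<le> Delta_comp ends Fe A2"
  using Delta_comp_ge[OF Fe_subset A_in_comps(1)] Delta_comp_ge[OF Fe_subset A_in_comps(2)] by simp_all

lemma Delta_A_eq:
  assumes "A1 = A2"
  shows "Delta_comp ends Fe A1 = Delta_comp ends E Ae - 1"
proof -
  have "comp_edges ends Fe A1 = EAe - {e}" using comp_edges_A assms by simp
  moreover have "A1 = Ae" using Ae_eq assms by simp
  ultimately show ?thesis using card_EAe unfolding Delta_comp_def by simp
qed

lemma Delta_A_split:
  assumes ne: "A1 \<noteq> A2"
  shows "Delta_comp ends Fe A1 + Delta_comp ends Fe A2 = Delta_comp ends E Ae - 1"
proof -
  have dj: "A1 \<inter> A2 = {}" using A_disjoint[OF ne] .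
  have "finite A1" "finite A2" using A_subset_Ae finite_Ae finite_subset by blast+
  then have cA: "card Ae = card A1 + card A2" using Ae_eq dj card_Un_disjoint by metis
  have dje: "comp_edges ends Fe A1 \<inter> comp_edges ends Fe A2 = {}"
  proof (rule equals0I)
    fix g assume "g \<in> comp_edges ends Fe A1 \<inter> comp_edges ends Fe A2"
    then have g: "g \<in> Fe" "ends g \<subseteq> A1" "ends g \<subseteq> A2" unfolding comp_edges_def by blast+
    then show False using ends_nonempty[of g] dj by blast
  qed
  have "finite (comp_edges ends Fe A1)" "finite (comp_edges ends Fe A2)"
    using finite_edges comp_edges_subset Fe_subset by (meson order_trans)+
  then have "card (EAe - {e}) = card (comp_edges ends Fe A1) + card (comp_edges ends Fe A2)"
    using comp_edges_A dje card_Un_disjoint by metis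
  then show ?thesis using card_EAe cA unfolding Delta_comp_def by simp
qed

lemma Le_subset: "Le \<subseteq> E"
  using max_leafless_subset[of ends EAe] comp_edges_subset[of ends E Ae] by blast

text \<open>If \<open>e\<close> is a kernel edge and \<open>A1\<close> were a tree, the kernel edges inside \<open>A1\<close> would
  form a nonempty subgraph of a tree with no leaf except possibly \<open>w1\<close>.\<close>
lemma Delta_A1_if_kernel_edge:
  assumes ne: "A1 \<noteq> A2" and eL: "e \<in> Le"
  shows "Delta_comp ends Fe A1 \<noteq> -1"
proof
  assume tree: "Delta_comp ends Fe A1 = -1"
  have lL: "leafless ends Le" by (rule leafless_max_leafless)
  have "w1 \<noteq> w2" using ne by auto
  then have "card (ends e) = 2" using ends_e by simp
  then obtain h where h: "h \<in> Le" "h \<noteq> e" "w1 \<in> ends h"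
    using leafless_other_edge[OF lL eL] ends_e by blast
  define Y1 where "Y1 = comp_edges ends Fe A1"
  have hF: "h \<in> Fe" using h Le_subset by blast
  have hY: "h \<in> Y1" using comp_edgesI[OF Fe_subset hF h(3) w_in_A(1) A_in_comps(1)] by (simp add: Y1_def)
  have Y1E: "Y1 \<subseteq> E" using comp_edges_subset[of ends Fe A1] by (auto simp: Y1_def)
  have cY: "connected_edges ends Y1"
    using connected_comp_edges[OF Fe_subset A_in_comps(1)] by (simp add: Y1_def)
  have "comp_edges ends Fe A1 \<noteq> {}" using hY by (auto simp: Y1_def)
  then have dY: "delta ends Y1 = -1"
    using Delta_comp_eq_delta[OF verts_comp_edges_nonempty[OF Fe_subset A_in_comps(1)]] tree
    by (simp add: Y1_def)
  obtain u g where leaf: "is_leaf ends (verts ends (Le \<inter> Y1)) (Le \<inter> Y1) u g" and uw: "u \<noteq> w1"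
    by (rule obtain_leaf_avoiding[OF cY Y1E dY, of "Le \<inter> Y1" w1]) (use hY h(1) in auto)
  have g: "g \<in> Le" "g \<in> Y1" and ug: "u \<in> ends g" and c2: "card (ends g) = 2"
    and only: "\<forall>g'\<in>Le \<inter> Y1. u \<in> ends g' \<longrightarrow> g' = g"
    using is_leafD[OF leaf] by auto
  have uA: "u \<in> A1" using g(2) ug unfolding Y1_def comp_edges_def by blast
  then have "u \<notin> ends e" using uw ends_e A_disjoint[OF ne] w_in_A(2) by blast
  obtain h' where h': "h' \<in> Le" "h' \<noteq> g" "u \<in> ends h'"
    by (rule leafless_other_edge[OF lL g(1) ug c2])
  then have "h' \<in> Fe" using \<open>u \<notin> ends e\<close> Le_subset by blast
  then have "h' \<in> Y1" using comp_edgesI[OF Fe_subset _ h'(3) uA A_in_comps(1)] by (simp add: Y1_def)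
  then show False using only h' by blast
qed

lemma Delta_A2_if_kernel_edge:
  assumes "A1 \<noteq> A2" "e \<in> Le"
  shows "Delta_comp ends Fe A2 \<noteq> -1"
proof -
  interpret swap: edge_deletion E ends e w2 w1
    by unfold_locales (simp_all add: e_in_E ends_e insert_commute)
  have "w2 \<in> Ae" using ends_e_subset_Ae ends_e by blast
  then have "comp_of ends VE E w2 = Ae" by (rule comp_of_eq)
  then show ?thesis using swap.Delta_A1_if_kernel_edge assms by simp
qed

lemma tree_if_not_kernel_edge:
  assumes ne: "A1 \<noteq> A2" and D1: "1 \<le> Delta_comp ends E Ae" and eL: "e \<notin> Le"
  shows "Delta_comp ends Fe A1 = -1 \<or> Delta_comp ends Fe A2 = -1"
proof (rule ccontr)
  assume "\<not> ?thesis"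
  then have d: "0 \<le> Delta_comp ends Fe A1" "0 \<le> Delta_comp ends Fe A2" using Delta_A_ge by auto
  define L1 where "L1 = Le \<inter> comp_edges ends Fe A1"
  define L2 where "L2 = Le \<inter> comp_edges ends Fe A2"
  have "Le \<subseteq> EAe - {e}" using max_leafless_subset[of ends EAe] eL by blast
  then have Lsplit: "Le = L1 \<union> L2" unfolding L1_def L2_def comp_edges_A[symmetric] by blast
  have LE: "L1 \<subseteq> E" "L2 \<subseteq> E" using Le_subset unfolding L1_def L2_def by blast+
  have "verts ends L1 \<subseteq> verts ends (comp_edges ends Fe A1)" unfolding L1_def by (rule verts_mono) blast
  then have V1: "verts ends L1 \<subseteq> A1" using verts_comp_edges_subset[of ends Fe A1] by blast
  have "verts ends L2 \<subseteq> verts ends (comp_edges ends Fe A2)" unfolding L2_def by (rule verts_mono) blast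
  then have V2: "verts ends L2 \<subseteq> A2" using verts_comp_edges_subset[of ends Fe A2] by blast
  have "verts ends L1 \<inter> verts ends L2 = {}" using V1 V2 A_disjoint[OF ne] by blast
  then have "delta ends Le = delta ends L1 + delta ends L2"
    unfolding Lsplit by (rule delta_Un_disjoint[OF LE])
  moreover have "delta ends L1 \<le> Delta_comp ends Fe A1"
    by (rule delta_le_Delta_comp[OF Fe_subset A_in_comps(1) _ d(1)]) (simp add: L1_def)
  moreover have "delta ends L2 \<le> Delta_comp ends Fe A2"
    by (rule delta_le_Delta_comp[OF Fe_subset A_in_comps(2) _ d(2)]) (simp add: L2_def)
  moreover have "delta ends Le = Delta_comp ends E Ae" by (rule delta_max_leafless(1)[OF Ae_in_comps D1])
  ultimately show False using Delta_A_split[OF ne] by linarith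
qed

lemma kernel_edge_if_connected:
  assumes eq: "A1 = A2" and D1: "1 \<le> Delta_comp ends E Ae"
  shows "e \<in> Le"
proof (rule ccontr)
  assume eL: "e \<notin> Le"
  have "Le \<subseteq> EAe - {e}" using max_leafless_subset[of ends EAe] eL by blast
  then have "Le \<subseteq> comp_edges ends Fe A1" using comp_edges_A eq by simp
  moreover have "0 \<le> Delta_comp ends Fe A1" using Delta_A_eq[OF eq] D1 by linarith
  ultimately have "delta ends Le \<le> Delta_comp ends Fe A1"
    by (rule delta_le_Delta_comp[OF Fe_subset A_in_comps(1)])
  moreover have "delta ends Le = Delta_comp ends E Ae" by (rule delta_max_leafless(1)[OF Ae_in_comps D1])
  ultimately show False using Delta_A_eq[OF eq] by linarith
qed

lemma mem_core_edges_iff_kernel_edge: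
  "e \<in> core_edges E ends \<longleftrightarrow> 1 \<le> Delta_comp ends E Ae \<and> e \<in> Le"
proof
  assume "e \<in> core_edges E ends"
  then obtain C where C: "C \<in> comps ends VE E" "1 \<le> Delta_comp ends E C"
    "e \<in> max_leafless ends (comp_edges ends E C)"
    unfolding mem_core_edges_iff by blast
  then have "e \<in> comp_edges ends E C" using max_leafless_subset[of ends "comp_edges ends E C"] by blast
  then have "w1 \<in> C" using ends_e unfolding comp_edges_def by blast
  then have "C = Ae" using comps_disjoint[OF C(1) Ae_in_comps _ w_in_A(3)] by blast
  then show "1 \<le> Delta_comp ends E Ae \<and> e \<in> Le" using C(2,3) by simp
next
  assume "1 \<le> Delta_comp ends E Ae \<and> e \<in> Le"
  then show "e \<in> core_edges E ends" unfolding mem_core_edges_iff using Ae_in_comps by blast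
qed

abbreviation new_trees :: "'v set set" where
  "new_trees \<equiv> {P \<in> {A1, A2}. Delta_comp ends Fe P = -1}"

lemma tree_comps_Fe: "tree_comps ends VE Fe = (tree_comps ends VE E - {Ae}) \<union> new_trees"
proof -
  have other: "Delta_comp ends Fe C = Delta_comp ends E C" if "C \<in> comps ends VE E - {Ae}" for C
    using comp_edges_Fe_outside that unfolding Delta_comp_def by simp
  show ?thesis
  proof (intro set_eqI iffI)
    fix C assume "C \<in> tree_comps ends VE Fe"
    then have C: "C \<in> (comps ends VE E - {Ae}) \<union> {A1, A2}" "Delta_comp ends Fe C = -1"
      unfolding tree_comps_def comps_Fe by blast+
    show "C \<in> (tree_comps ends VE E - {Ae}) \<union> new_trees"
    proof (cases "C \<in> {A1, A2}")
      case False
      then have "C \<in> comps ends VE E - {Ae}" using C(1) by blast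
      then show ?thesis using other C(2) unfolding tree_comps_def by simp
    qed (use C(2) in blast)
  next
    fix C assume C: "C \<in> (tree_comps ends VE E - {Ae}) \<union> new_trees"
    show "C \<in> tree_comps ends VE Fe"
    proof (cases "C \<in> new_trees")
      case True
      then show ?thesis using A_in_comps unfolding tree_comps_def by blast
    next
      case False
      then have "C \<in> comps ends VE E - {Ae}" "Delta_comp ends E C = -1"
        using C unfolding tree_comps_def by blast+
      then show ?thesis using other comps_Fe unfolding tree_comps_def by simp
    qed
  qed
qed

lemma mem_Yset_iff_new_trees:
  "e \<in> Yset E ends \<longleftrightarrow> (if Delta_comp ends E Ae = -1 then 1 else 0) < card new_trees"
proof -
  have fin: "finite (tree_comps ends VE E)"
    using finite_comps unfolding tree_comps_def by simp
  have "(tree_comps ends VE E - {Ae}) \<inter> new_trees = {}"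
    using A_notin_comps_E unfolding tree_comps_def by blast
  then have Fe_count: "card (tree_comps ends VE Fe) = card (tree_comps ends VE E - {Ae}) + card new_trees"
    unfolding tree_comps_Fe using fin by (simp add: card_Un_disjoint)
  have E_count: "card (tree_comps ends VE E)
      = card (tree_comps ends VE E - {Ae}) + (if Delta_comp ends E Ae = -1 then 1 else 0)"
  proof (cases "Delta_comp ends E Ae = -1")
    case True
    then have "Ae \<in> tree_comps ends VE E" using Ae_in_comps unfolding tree_comps_def by blast
    then show ?thesis using fin True card_Suc_Diff1 by fastforce
  next
    case False
    then have "Ae \<notin> tree_comps ends VE E" unfolding tree_comps_def by blast
    then show ?thesis using False by simp
  qed
  show ?thesis
    unfolding Yset_def tree_count_eq_card using Fe_count E_count e_in_E by auto
qed

lemma card_new_trees_split: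
  assumes "A1 \<noteq> A2"
  shows "card new_trees = (if Delta_comp ends Fe A1 = -1 then 1 else 0)
                          + (if Delta_comp ends Fe A2 = -1 then 1 else 0)"
proof -
  let ?T1 = "if Delta_comp ends Fe A1 = -1 then {A1} else {}"
  let ?T2 = "if Delta_comp ends Fe A2 = -1 then {A2} else {}"
  have "new_trees = ?T1 \<union> ?T2" by auto
  moreover have "?T1 \<inter> ?T2 = {}" using assms by auto
  ultimately show ?thesis by (simp add: card_Un_disjoint)
qed

lemma mem_Yset_iff_not_core: "e \<in> Yset E ends \<longleftrightarrow> e \<notin> core_edges E ends"
proof (cases "A1 = A2")
  case True
  have trees: "new_trees = (if Delta_comp ends Fe A1 = -1 then {A1} else {})"
    using True by auto
  show ?thesis
  proof (cases "1 \<le> Delta_comp ends E Ae")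
    case True
    then show ?thesis
      using kernel_edge_if_connected[OF \<open>A1 = A2\<close>] mem_core_edges_iff_kernel_edge
        mem_Yset_iff_new_trees trees Delta_A_eq[OF \<open>A1 = A2\<close>] by simp
  next
    case False
    then have "Delta_comp ends E Ae = 0" using Delta_A_eq[OF True] Delta_A_ge(1) by simp
    then show ?thesis
      using mem_core_edges_iff_kernel_edge mem_Yset_iff_new_trees trees Delta_A_eq[OF True] by simp
  qed
next
  case False
  note split = Delta_A_split[OF False] and count = card_new_trees_split[OF False]
  show ?thesis
  proof (cases "1 \<le> Delta_comp ends E Ae")
    case True
    show ?thesis
    proof (cases "e \<in> Le")
      case True
      then show ?thesis
        using Delta_A1_if_kernel_edge[OF False] Delta_A2_if_kernel_edge[OF False] count
          mem_Yset_iff_new_trees mem_core_edges_iff_kernel_edge \<open>1 \<le> _\<close> by simp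
    next
      case eL: False
      then show ?thesis
        using tree_if_not_kernel_edge[OF False True] count mem_Yset_iff_new_trees
          mem_core_edges_iff_kernel_edge True by auto
    qed
  next
    case small: False
    then show ?thesis
      using split Delta_A_ge count mem_Yset_iff_new_trees mem_core_edges_iff_kernel_edge by auto
  qed
qed

end

context multigraph_on
begin

lemma Diff_core_edges_eq_Yset: "E - core_edges E ends = Yset E ends"
proof -
  have "f \<in> Yset E ends \<longleftrightarrow> f \<notin> core_edges E ends" if f: "f \<in> E" for f
  proof -
    obtain w1 w2 where "ends f = {w1, w2}" using obtain_ends_pair[OF f] .
    then interpret edge_deletion E ends f w1 w2 by unfold_locales (rule f)
    show ?thesis by (rule mem_Yset_iff_not_core)
  qed
  moreover have "Yset E ends \<subseteq> E" unfolding Yset_def by blast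
  ultimately show ?thesis by blast
qed

end

theorem mainTheorem12:
  fixes E :: "'e set" and ends :: "'e \<Rightarrow> 'v set" and k :: nat
  assumes "multigraph E ends"
    and "k \<ge> 1"
    and "nontrivial_matroid E (Mk_circuits E ends k)"
  shows "coloops E (Mk_circuits E ends k) = E - core_edges E ends
         \<and> E - core_edges E ends = Yset E ends"
proof -
  interpret multigraph_on E ends by (rule multigraph_on.intro) (rule assms(1))
  have "Mk_circuits E ends k \<noteq> {}" using assms(3) unfolding nontrivial_matroid_def by blast
  then show ?thesis using coloops_eq_Diff_core_edges[OF assms(2)] Diff_core_edges_eq_Yset by blast
qed

end
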